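(* Let $p\ge1$. Let $\{\zeta_t\}$ be i.i.d. with $|\mu|_p=E|\zeta_0|^p<\infty$ and $E\zeta_0=0$ if $p>1$; let $a\in\mathbb R$; let $Q$ satisfy $|Q(x)-Q(y)|\le\mathrm{Lip}_Q|x-y|$ for all $x,y\in\mathbb R$; let real $b_j$ satisfy $|b_j|<c\,j^{-\gamma}$ for all $j\ge1$, for some $c>0$ and $\gamma>\max\{1/2,1/p\}$; and assume $K_p|\mu|_p\mathrm{Lip}_Q^pB_p<1$. Let $\{X_t\}$ and $\{r_t\}$ be stationary $L^p$-solutions of $X_t=\sum_{s<t}b_{t-s}\zeta_sQ(a+X_s)$ and $r_t=\zeta_tQ(a+\sum_{s<t}b_{t-s}r_s)$, respectively. Then $$\delta_p(k;\{X_t\})=O(k^{-\gamma})\quad\text{and}\quad\delta_p(k;\{r_t\})=O(k^{-\gamma}),\qquad k\to\infty.$$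
   Context: $|\mu|_p:=E|\zeta_0|^p$, $\mathcal F_t:=\sigma(\zeta_s,s\le t)$; adapted means $\mathcal F_t$-measurable, predictable means $\mathcal F_{t-1}$-measurable at each $t$. $B_p:=\sum_{j\ge1}|b_j|^p$ if $0<p<2$, $B_p:=(\sum_{j\ge1}b_j^2)^{p/2}$ if $p\ge2$. An $L^p$-solution of the $r$-equation is an adapted process with $E|r_t|^p<\infty$ such that for every $t$ the series $\sum_{s<t}b_{t-s}r_s$ converges in $L^p$ and the equation holds; an $L^p$-solution of the $X$-equation is a predictable process with $E|X_t|^p<\infty$ such that the series $\sum_{s<t}b_{t-s}\zeta_sQ(a+X_s)$ converges in $L^p$ for every $t$ and the equation holds. $K_p$ is the Rosenthal constant: a constant depending only on $p$ such that for every martingale difference sequence $\{Y_j,j\ge1\}$ (when $p>1$; arbitrary sequence when $p\le1$) with $E|Y_j|^p<\infty$ and convergent right-hand side, $E|\sum Y_j|^p\le K_p\sum E|Y_j|^p$ for $p\le2$ and $E|\sum Y_j|^p\le K_p(\sum(E|Y_j|^p)^{2/p})^{p/2}$ for $p>2$. For a stationary process written as a causal Bernoulli shift $y_t=f(\zeta_s,s\le t)$ with $f$ measurable, and $\zeta_0'$ an independent copy of $\zeta_0$ independent of $\{\zeta_t\}$, put $y_i':=f(\dots,\zeta_{-1},\zeta_0',\zeta_1,\dots,\zeta_i)$ (i.e. $\zeta_0$ replaced by $\zeta_0'$) and $\delta_p(i;\{y_t\}):=(E|y_i-y_i'|^p)^{1/p}$. The solutions $X_t,r_t$ are functions of $(\zeta_s,s\le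 t)$ and are regarded as such Bernoulli shifts. *)

theory Defs
  imports "HOL-Probability.Probability" "HOL-Library.Landau_Symbols"
begin

text \<open>Probability space: coordinates Some t carry zeta_t (t in Z), coordinate None
  carries the independent copy zeta_0'.\<close>

type_synonym omega = "int option \<Rightarrow> real"

definition iid_space :: "real measure \<Rightarrow> omega measure" where
  "iid_space \<mu> = PiM UNIV (\<lambda>_. \<mu>)"

definition past :: "omega \<Rightarrow> int \<Rightarrow> nat \<Rightarrow> real" where
  "past \<omega> t j = \<omega> (Some (t - int j))"

definition past' :: "omega \<Rightarrow> int \<Rightarrow> nat \<Rightarrow> real" where
  "past' \<omega> t j = (if t - int j = 0 then \<omega> None else \<omega> (Some (t - int j)))"

definition Bp :: "real \<Rightarrow> (nat \<Rightarrow> real) \<Rightarrow> real" where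
  "Bp p b = (if p < 2 then (\<Sum>j. \<bar>b (Suc j)\<bar> powr p)
             else (\<Sum>j. (b (Suc j))\<^sup>2) powr (p / 2))"

definition is_mds :: "'a measure \<Rightarrow> (nat \<Rightarrow> 'a \<Rightarrow> real) \<Rightarrow> bool" where
  "is_mds M Y \<longleftrightarrow> (\<exists>F. (\<forall>j. sigma_finite_subalgebra M (F j))
      \<and> (\<forall>i j. i \<le> j \<longrightarrow> sets (F i) \<subseteq> sets (F j))
      \<and> (\<forall>j. Y j \<in> borel_measurable (F (Suc j)))
      \<and> (\<forall>j. integrable M (Y j))
      \<and> (\<forall>j. AE x in M. real_cond_exp M (F j) (Y j) x = 0))"

text \<open>K is a Rosenthal constant for exponent p (on probability spaces over type 'a).
  Stated for finite sums, which is equivalent to the version for convergent series.\<close>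
definition rosenthal_const :: "'a itself \<Rightarrow> real \<Rightarrow> real \<Rightarrow> bool" where
  "rosenthal_const (_::'a itself) p K \<longleftrightarrow>
    (\<forall>(M::'a measure) Y n. prob_space M \<longrightarrow> (p > 1 \<longrightarrow> is_mds M Y)
      \<longrightarrow> (\<forall>j. Y j \<in> borel_measurable M)
      \<longrightarrow> (\<forall>j. integrable M (\<lambda>x. \<bar>Y j x\<bar> powr p))
      \<longrightarrow> (if p \<le> 2 then
             (\<integral>x. \<bar>\<Sum>j<n. Y j x\<bar> powr p \<partial>M) \<le> K * (\<Sum>j<n. \<integral>x. \<bar>Y j x\<bar> powr p \<partial>M)
           else
             (\<integral>x. \<bar>\<Sum>j<n. Y j x\<bar> powr p \<partial>M)
               \<le> K * (\<Sum>j<n. (\<integral>x. \<bar>Y j x\<bar> powr p \<partial>M) powr (2 / p)) powr (p / 2)))"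

definition Xsol :: "omega measure \<Rightarrow> real \<Rightarrow> real \<Rightarrow> (nat \<Rightarrow> real) \<Rightarrow> (real \<Rightarrow> real)
    \<Rightarrow> (int \<Rightarrow> omega \<Rightarrow> real) \<Rightarrow> bool" where
  "Xsol M p a b Q X \<longleftrightarrow> (\<forall>t. X t \<in> borel_measurable M
     \<and> integrable M (\<lambda>\<omega>. \<bar>X t \<omega>\<bar> powr p)
     \<and> ((\<lambda>n. \<integral>\<^sup>+\<omega>. ennreal (\<bar>X t \<omega> -
           (\<Sum>j\<in>{1..n}. b j * \<omega> (Some (t - int j)) * Q (a + X (t - int j) \<omega>))\<bar> powr p) \<partial>M)
         \<longlonglongrightarrow> 0))"

definition rsol :: "omega measure \<Rightarrow> real \<Rightarrow> real \<Rightarrow> (nat \<Rightarrow> real) \<Rightarrow> (real \<Rightarrow> real)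
    \<Rightarrow> (int \<Rightarrow> omega \<Rightarrow> real) \<Rightarrow> bool" where
  "rsol M p a b Q r \<longleftrightarrow> (\<forall>t. r t \<in> borel_measurable M
     \<and> integrable M (\<lambda>\<omega>. \<bar>r t \<omega>\<bar> powr p)
     \<and> (\<exists>Y \<in> borel_measurable M.
          ((\<lambda>n. \<integral>\<^sup>+\<omega>. ennreal (\<bar>Y \<omega> - (\<Sum>j\<in>{1..n}. b j * r (t - int j) \<omega>)\<bar> powr p) \<partial>M)
             \<longlonglongrightarrow> 0)
          \<and> (AE \<omega> in M. r t \<omega> = \<omega> (Some t) * Q (a + Y \<omega>))))"

text \<open>delta_p(i) for the Bernoulli shift y_i = f(zeta_i, zeta_(i-1), ...).\<close>
definition deltap :: "omega measure \<Rightarrow> real \<Rightarrow> ((nat \<Rightarrow> real) \<Rightarrow> real) \<Rightarrow> int \<Rightarrow> real" where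
  "deltap M p f i = (\<integral>\<omega>. \<bar>f (past \<omega> i) - f (past' \<omega> i)\<bar> powr p \<partial>M) powr (1 / p)"

end

theory Submission
  imports Defs
begin

text \<open>
  Couple each solution with its copy driven by the same noise, except that \<open>\<zeta>\<^sub>0\<close> is replaced
  by the independent \<open>\<zeta>\<^sub>0'\<close>; then \<open>\<delta>\<^sub>p(k)\<^sup>p\<close> is the \<open>p\<close>-th moment of the difference at time \<open>k\<close>.
  Subtracting the defining series of the two copies, the difference at time \<open>k\<close> (for \<open>X\<close>), or
  the difference of the arguments of \<open>Q\<close> (for \<open>r\<close>), is a finite sum over \<open>i < k\<close> of terms
  \<open>U\<^sub>i \<eta>\<^sub>i\<close>, where \<open>\<eta>\<^sub>i\<close> is the noise entering at time \<open>i\<close> (\<open>\<eta>\<^sub>0 = \<zeta>\<^sub>0 - \<zeta>\<^sub>0'\<close>) and \<open>U\<^sub>i\<close>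
  depends only on the earlier noise. These terms are martingale differences, so Rosenthal's
  inequality and the Lipschitz bound on \<open>Q\<close> bound the \<open>k\<close>-th moment by the Rosenthal bound
  of the numbers \<open>|b\<^sub>k\<^sub>-\<^sub>i|\<^sup>p\<close> times earlier moments. Raised to the power \<open>min 1 (2/p)\<close>, this is
  a linear convolution inequality whose kernel decays like a power of \<open>k\<close> and has total mass
  \<open>(K |\<mu>|\<^sub>p Lip\<^sub>Q\<^sup>p B\<^sub>p)\<close> to that power, which is less than \<open>1\<close>; solutions of such an
  inequality decay at the rate of the kernel, which gives \<open>\<delta>\<^sub>p(k) = O(k\<^sup>-\<^sup>\<gamma>)\<close>.
\<close>

section \<open>A convolution inequality\<close>

lemma lessThan_eq_insert_atLeastLessThan: "(k::nat) \<ge> 1 \<Longrightarrow> {..<k} = insert 0 {1..<k}"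
  by auto

lemma sum_shift_le_suminf:
  fixes a :: "nat \<Rightarrow> real"
  assumes "summable a" "\<And>j. a j \<ge> 0" "finite S" "\<And>k. k \<in> S \<Longrightarrow> s < k"
  shows "(\<Sum>k\<in>S. a (k - s)) \<le> (\<Sum>j. a j)"
proof -
  have inj: "inj_on (\<lambda>k. k - s) S" using assms(4) by (intro inj_onI) force
  have "(\<Sum>k\<in>S. a (k - s)) = (\<Sum>j\<in>(\<lambda>k. k - s) ` S. a j)"
    by (simp add: sum.reindex[OF inj])
  also have "\<dots> \<le> (\<Sum>j. a j)"
    by (rule sum_le_suminf) (use assms in auto)
  finally show ?thesis .
qed

lemma sum_reflect_le_suminf:
  fixes a :: "nat \<Rightarrow> real"
  assumes "summable a" "\<And>j. a j \<ge> 0"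
  shows "(\<Sum>s\<in>{1..<k}. a (k - s)) \<le> (\<Sum>j. a j)"
proof -
  have inj: "inj_on (\<lambda>s. k - s) {1..<k}" by (intro inj_onI) auto
  have "(\<Sum>s\<in>{1..<k}. a (k - s)) = (\<Sum>j\<in>(\<lambda>s. k - s) ` {1..<k}. a j)"
    by (subst sum.reindex[OF inj]) (simp add: comp_def)
  also have "\<dots> \<le> (\<Sum>j. a j)"
    by (rule sum_le_suminf) (use assms in auto)
  finally show ?thesis .
qed

lemma convolution_inequality_sum_bound:
  fixes v a f :: "nat \<Rightarrow> real"
  assumes v: "\<And>k. v k \<ge> 0" and a: "\<And>j. a j \<ge> 0" "summable a" "(\<Sum>j. a j) < 1"
    and f: "\<And>k. f k \<ge> 0" "summable f"
    and rec: "\<And>k. k \<ge> 1 \<Longrightarrow> v k \<le> f k + (\<Sum>s\<in>{1..<k}. a (k - s) * v s)"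
  shows "(\<Sum>k\<in>{1..N}. v k) \<le> (\<Sum>k. f k) / (1 - (\<Sum>j. a j))"
proof -
  let ?\<rho> = "\<Sum>j. a j"
  have "(\<Sum>k\<in>{1..N}. v k) \<le> (\<Sum>k\<in>{1..N}. f k + (\<Sum>s\<in>{1..<k}. a (k - s) * v s))"
    by (rule sum_mono) (use rec in auto)
  also have "\<dots> = (\<Sum>k\<in>{1..N}. f k) + (\<Sum>k\<in>{1..N}. \<Sum>s\<in>{s\<in>{1..N}. s < k}. a (k - s) * v s)"
    by (simp add: sum.distrib) (intro sum.cong refl, auto)
  also have "(\<Sum>k\<in>{1..N}. \<Sum>s\<in>{s\<in>{1..N}. s < k}. a (k - s) * v s)
      = (\<Sum>s\<in>{1..N}. v s * (\<Sum>k\<in>{k\<in>{1..N}. s < k}. a (k - s)))"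
    by (subst sum.swap_restrict) (auto simp: sum_distrib_left mult.commute)
  also have "\<dots> \<le> (\<Sum>s\<in>{1..N}. v s * ?\<rho>)"
    by (intro sum_mono mult_left_mono sum_shift_le_suminf) (use a v in auto)
  also have "(\<Sum>k\<in>{1..N}. f k) \<le> (\<Sum>k. f k)"
    by (rule sum_le_suminf) (use f in auto)
  finally have "(\<Sum>k\<in>{1..N}. v k) \<le> (\<Sum>k. f k) + ?\<rho> * (\<Sum>k\<in>{1..N}. v k)"
    by (simp add: sum_distrib_left mult.commute)
  then have "(1 - ?\<rho>) * (\<Sum>k\<in>{1..N}. v k) \<le> (\<Sum>k. f k)"
    by (simp add: algebra_simps)
  then show ?thesis using a(3) by (simp add: field_simps)
qed

text \<open>Split the convolution at \<open>s = d k\<close>: the terms with \<open>s < d k\<close> are controlled by the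
  decay of the kernel and the summability of \<open>v\<close>, the others by induction; \<open>d < 1\<close> is chosen
  with \<open>d\<^sup>-\<^sup>\<beta> \<Sum> a < 1\<close>.\<close>
lemma convolution_inequality_power_decay:
  fixes v a :: "nat \<Rightarrow> real" and A C \<beta> :: real
  assumes \<beta>: "\<beta> > 1" and v0: "\<And>k. v k \<ge> 0" and a0: "\<And>j. a j \<ge> 0" and sa: "summable a"
    and r1: "(\<Sum>j. a j) < 1"
    and aC: "\<And>j. j \<ge> 1 \<Longrightarrow> a j \<le> C * real j powr (-\<beta>)"
    and rec: "\<And>k. k \<ge> 1 \<Longrightarrow> v k \<le> A * real k powr (-\<beta>) + (\<Sum>s\<in>{1..<k}. a (k - s) * v s)"
  shows "\<exists>B\<ge>0. \<forall>k\<ge>1. v k \<le> B * real k powr (-\<beta>)"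
proof -
  define \<rho> where "\<rho> = (\<Sum>j. a j)"
  have rho0: "0 \<le> \<rho>" unfolding \<rho>_def using suminf_nonneg[OF sa] a0 by blast
  have A0: "A \<ge> 0" using rec[of 1] v0[of 1] by simp
  define f where "f k = (if k = 0 then 0 else A * real k powr (-\<beta>))" for k
  have "summable (\<lambda>k. A * real k powr (-\<beta>))"
    using \<beta> by (intro summable_mult) (subst summable_real_powr_iff, simp)
  then have sf: "summable f" unfolding f_def
    by (rule summable_cong[THEN iffD1, rotated]) (auto intro!: always_eventually)
  have f0: "f k \<ge> 0" for k using A0 by (auto simp: f_def)
  define S where "S = (\<Sum>k. f k) / (1 - \<rho>)"
  have S0: "S \<ge> 0" unfolding S_def \<rho>_def using r1 suminf_nonneg[OF sf] f0 by auto
  have sumv: "(\<Sum>s\<in>{1..<k}. v s) \<le> S" for k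
  proof -
    have "(\<Sum>s\<in>{1..<k}. v s) = (\<Sum>s\<in>{1..k-1}. v s)" by (intro sum.cong) auto
    also have "\<dots> \<le> S" unfolding S_def \<rho>_def
      by (rule convolution_inequality_sum_bound[OF v0 a0 sa r1 f0 sf]) (use rec in \<open>auto simp: f_def\<close>)
    finally show ?thesis .
  qed
  define t where "t = (1 + \<rho>) / 2"
  have t: "0 < t" "t < 1" "\<rho> \<le> t" using rho0 r1 by (auto simp: t_def \<rho>_def)
  define d where "d = t powr (1 / \<beta>)"
  have d: "0 < d" "d < 1" using t \<beta> powr_less_mono2[of "1/\<beta>" t 1] unfolding d_def by auto
  have dpow: "d powr \<beta> = t" unfolding d_def using t \<beta> by (simp add: powr_powr)
  define \<delta> where "\<delta> = 1 - d"
  have \<delta>: "0 < \<delta>" using d by (auto simp: \<delta>_def)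
  define C' where "C' = max C 0"
  have C'0: "C' \<ge> 0" by (simp add: C'_def)
  define \<rho>' where "\<rho>' = \<rho> / t"
  have r': "0 \<le> \<rho>'" "\<rho>' < 1" using t rho0 r1 by (auto simp: \<rho>'_def t_def \<rho>_def field_simps)
  define B where "B = (A + C' * \<delta> powr (-\<beta>) * S) / (1 - \<rho>')"
  have B0: "B \<ge> 0" unfolding B_def using A0 C'0 S0 r' by auto
  have Beq: "A + C' * \<delta> powr (-\<beta>) * S + B * \<rho>' = B"
    using r' unfolding B_def by (simp add: field_simps)
  have "v k \<le> B * real k powr (-\<beta>)" if "k \<ge> 1" for k
    using that
  proof (induction k rule: less_induct)
    case (less k)
    have kpos: "real k > 0" using less.prems by auto
    have split: "a (k - s) * v s \<le> C' * (\<delta> * k) powr (-\<beta>) * v s + a (k - s) * (B * (d * k) powr (-\<beta>))"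
      if s: "s \<in> {1..<k}" for s
    proof (cases "real s < d * k")
      case True
      have ks: "real (k - s) \<ge> \<delta> * k" using True s by (simp add: \<delta>_def of_nat_diff algebra_simps)
      have "a (k - s) \<le> C * real (k - s) powr (-\<beta>)" using aC[of "k - s"] s by (simp del: of_nat_diff add: Suc_le_eq)
      also have "\<dots> \<le> C' * real (k - s) powr (-\<beta>)" by (intro mult_right_mono) (auto simp: C'_def)
      also have "\<dots> \<le> C' * (\<delta> * k) powr (-\<beta>)"
        using ks \<delta> kpos \<beta> C'0 by (intro mult_left_mono powr_mono2') auto
      finally have "a (k - s) * v s \<le> C' * (\<delta> * k) powr (-\<beta>) * v s"
        using v0 by (intro mult_right_mono) auto
      moreover have "a (k - s) * (B * (d * k) powr (-\<beta>)) \<ge> 0" using a0 B0 by auto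
      ultimately show ?thesis by linarith
    next
      case False
      have "v s \<le> B * real s powr (-\<beta>)" using less.IH[of s] s by auto
      also have "\<dots> \<le> B * (d * k) powr (-\<beta>)"
        using False d kpos \<beta> B0 by (intro mult_left_mono powr_mono2') auto
      finally have "a (k - s) * v s \<le> a (k - s) * (B * (d * k) powr (-\<beta>))"
        using a0 by (intro mult_left_mono) auto
      moreover have "C' * (\<delta> * k) powr (-\<beta>) * v s \<ge> 0" using C'0 v0 by auto
      ultimately show ?thesis by linarith
    qed
    have "v k \<le> A * real k powr (-\<beta>) + (\<Sum>s\<in>{1..<k}. a (k - s) * v s)" using rec less.prems by auto
    also have "(\<Sum>s\<in>{1..<k}. a (k - s) * v s)
       \<le> (\<Sum>s\<in>{1..<k}. C' * (\<delta> * k) powr (-\<beta>) * v s + a (k - s) * (B * (d * k) powr (-\<beta>)))"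
      by (rule sum_mono) (rule split)
    also have "\<dots> = C' * (\<delta> * k) powr (-\<beta>) * (\<Sum>s\<in>{1..<k}. v s) + B * (d * k) powr (-\<beta>) * (\<Sum>s\<in>{1..<k}. a (k - s))"
      by (simp add: sum.distrib sum_distrib_left sum_distrib_right mult.commute)
    also have "\<dots> \<le> C' * (\<delta> * k) powr (-\<beta>) * S + B * (d * k) powr (-\<beta>) * \<rho>"
      using sumv sum_reflect_le_suminf[OF sa a0, of k] C'0 B0
      by (intro add_mono mult_left_mono) (auto simp: \<rho>_def)
    also have "(\<delta> * k) powr (-\<beta>) = \<delta> powr (-\<beta>) * real k powr (-\<beta>)"
      using \<delta> kpos by (simp add: powr_mult)
    also have "(d * k) powr (-\<beta>) = real k powr (-\<beta>) / t"
      using d kpos dpow by (simp add: powr_mult powr_minus divide_inverse)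
    finally have "v k \<le> real k powr (-\<beta>) * (A + C' * \<delta> powr (-\<beta>) * S + B * \<rho>')"
      by (simp add: \<rho>'_def algebra_simps)
    then show ?case using Beq by (simp add: mult.commute)
  qed
  then show ?thesis using B0 by blast
qed

section \<open>The Rosenthal bound\<close>

definition rosenthal_bound :: "real \<Rightarrow> real \<Rightarrow> nat \<Rightarrow> (nat \<Rightarrow> real) \<Rightarrow> real" where
  "rosenthal_bound p K n e =
     (if p \<le> 2 then K * (\<Sum>j<n. e j) else K * (\<Sum>j<n. e j powr (2 / p)) powr (p / 2))"

lemma rosenthal_constD:
  assumes "rosenthal_const TYPE('a) p K" "prob_space (M :: 'a measure)" "p > 1 \<Longrightarrow> is_mds M Y"
    "\<And>j. Y j \<in> borel_measurable M" "\<And>j. integrable M (\<lambda>x. \<bar>Y j x\<bar> powr p)"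
  shows "(\<integral>x. \<bar>\<Sum>j<n. Y j x\<bar> powr p \<partial>M) \<le> rosenthal_bound p K n (\<lambda>j. \<integral>x. \<bar>Y j x\<bar> powr p \<partial>M)"
proof -
  note R = assms(1)[unfolded rosenthal_const_def, rule_format, of M Y n]
  from R[OF assms(2-5)] show ?thesis unfolding rosenthal_bound_def by (simp split: if_split_asm)
qed

lemma rosenthal_const_mono:
  assumes "rosenthal_const TYPE('a) p K" "K \<le> K'"
  shows "rosenthal_const TYPE('a) p K'"
  unfolding rosenthal_const_def
proof (intro allI impI)
  fix M :: "'a measure" and Y n
  assume "prob_space M" "p > 1 \<longrightarrow> is_mds M Y" "\<forall>j. Y j \<in> borel_measurable M"
    "\<forall>j. integrable M (\<lambda>x. \<bar>Y j x\<bar> powr p)"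
  then have "(\<integral>x. \<bar>\<Sum>j<n. Y j x\<bar> powr p \<partial>M) \<le> rosenthal_bound p K n (\<lambda>j. \<integral>x. \<bar>Y j x\<bar> powr p \<partial>M)"
    by (intro rosenthal_constD[OF assms(1)]) auto
  also have "\<dots> \<le> rosenthal_bound p K' n (\<lambda>j. \<integral>x. \<bar>Y j x\<bar> powr p \<partial>M)"
    unfolding rosenthal_bound_def using assms(2) by (auto intro!: mult_right_mono sum_nonneg)
  finally show "if p \<le> 2 then
      (\<integral>x. \<bar>\<Sum>j<n. Y j x\<bar> powr p \<partial>M) \<le> K' * (\<Sum>j<n. \<integral>x. \<bar>Y j x\<bar> powr p \<partial>M)
    else (\<integral>x. \<bar>\<Sum>j<n. Y j x\<bar> powr p \<partial>M)
      \<le> K' * (\<Sum>j<n. (\<integral>x. \<bar>Y j x\<bar> powr p \<partial>M) powr (2 / p)) powr (p / 2)"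
    by (simp add: rosenthal_bound_def split: if_split_asm)
qed

lemma rosenthal_bound_mono:
  assumes "K \<ge> 0" "\<And>j. j < n \<Longrightarrow> 0 \<le> e j" "\<And>j. j < n \<Longrightarrow> e j \<le> e' j"
  shows "rosenthal_bound p K n e \<le> rosenthal_bound p K n e'"
proof (cases "p \<le> 2")
  case True
  then show ?thesis
    unfolding rosenthal_bound_def using assms by (auto intro!: mult_left_mono sum_mono)
next
  case False
  have "(\<Sum>j<n. e j powr (2 / p)) \<le> (\<Sum>j<n. e' j powr (2 / p))"
    using False assms by (intro sum_mono powr_mono2) auto
  then have "(\<Sum>j<n. e j powr (2 / p)) powr (p / 2) \<le> (\<Sum>j<n. e' j powr (2 / p)) powr (p / 2)"
    using False by (intro powr_mono2) (auto intro: sum_nonneg)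
  then show ?thesis unfolding rosenthal_bound_def using False assms(1) by (simp add: mult_left_mono)
qed

lemma rosenthal_bound_cmult:
  assumes "c \<ge> 0" "\<And>j. 0 \<le> e j" "p > 0"
  shows "c * rosenthal_bound p K n e = rosenthal_bound p K n (\<lambda>j. c * e j)"
proof (cases "p \<le> 2")
  case True
  then show ?thesis unfolding rosenthal_bound_def by (simp add: sum_distrib_left mult_ac)
next
  case False
  define S where "S = (\<Sum>j<n. e j powr (2 / p))"
  have S: "S \<ge> 0" unfolding S_def by (simp add: sum_nonneg)
  have "c * rosenthal_bound p K n e = c * (K * S powr (p / 2))"
    unfolding rosenthal_bound_def S_def using False by simp
  also have "\<dots> = K * (c powr (2 / p) * S) powr (p / 2)"
    using assms S by (simp add: powr_mult powr_powr)
  also have "\<dots> = rosenthal_bound p K n (\<lambda>j. c * e j)"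
    unfolding rosenthal_bound_def S_def using False assms by (simp add: powr_mult sum_distrib_left)
  finally show ?thesis .
qed

text \<open>The exponent \<open>min 1 (2/p)\<close> turns both cases of the Rosenthal bound into a plain sum.\<close>
lemma rosenthal_bound_powr:
  assumes "p \<ge> 1" "K \<ge> 0" "\<And>j. 0 \<le> e j"
  shows "rosenthal_bound p K n e powr min 1 (2 / p) = K powr min 1 (2 / p) * (\<Sum>j<n. e j powr min 1 (2 / p))"
proof (cases "p \<le> 2")
  case True
  then have "min 1 (2 / p) = 1" using assms(1) by (simp add: field_simps)
  then show ?thesis using True assms by (simp add: rosenthal_bound_def powr_one sum_nonneg)
next
  case False
  then have "min 1 (2 / p) = 2 / p" by (simp add: field_simps)
  then show ?thesis
    using False assms by (simp add: rosenthal_bound_def powr_mult powr_powr sum_nonneg)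
qed

lemma abs_powr_two: "\<bar>x::real\<bar> powr 2 = x\<^sup>2"
  by (cases "x = 0") (simp_all add: powr_numeral)

lemma Bp_powr:
  assumes "p \<ge> 1" "summable (\<lambda>j. \<bar>b j\<bar> powr min p 2)"
  shows "Bp p b powr min 1 (2 / p) = (\<Sum>j. \<bar>b (Suc j)\<bar> powr min p 2)"
proof -
  have nonneg: "0 \<le> (\<Sum>j. \<bar>b (Suc j)\<bar> powr min p 2)"
    using summable_ignore_initial_segment[OF assms(2), of 1] by (intro suminf_nonneg) auto
  consider "p < 2" | "p = 2" | "p > 2" by linarith
  then show ?thesis
  proof cases
    case 1
    then have "min 1 (2 / p) = 1" using assms(1) by (simp add: field_simps)
    then show ?thesis using 1 nonneg by (simp add: Bp_def powr_one)
  next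
    case 2
    then show ?thesis using nonneg by (simp add: Bp_def powr_one abs_powr_two)
  next
    case 3
    then show ?thesis using nonneg by (simp add: Bp_def powr_powr abs_powr_two)
  qed
qed

lemma Bp_nonneg:
  assumes "summable (\<lambda>j. \<bar>b j\<bar> powr min p 2)"
  shows "Bp p b \<ge> 0"
  using summable_ignore_initial_segment[OF assms, of 1] by (auto simp: Bp_def intro!: suminf_nonneg)

lemma summable_powr_of_power_bound:
  fixes b :: "nat \<Rightarrow> real"
  assumes "c > 0" "r > 0" "\<forall>j\<ge>1. \<bar>b j\<bar> < c * real j powr (-\<gamma>)" "\<gamma> * r > 1"
  shows "summable (\<lambda>j. \<bar>b j\<bar> powr r)"
proof (rule summable_comparison_test)
  show "summable (\<lambda>j. c powr r * real j powr (-(\<gamma> * r)))"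
    using assms(4) by (intro summable_mult) (subst summable_real_powr_iff, simp)
  have "\<bar>b j\<bar> powr r \<le> c powr r * real j powr (-(\<gamma> * r))" if "j \<ge> 1" for j
  proof -
    have "\<bar>b j\<bar> powr r \<le> (c * real j powr (-\<gamma>)) powr r"
      using assms that by (intro powr_mono2) (auto intro: less_imp_le)
    also have "\<dots> = c powr r * real j powr (-(\<gamma> * r))"
      using assms by (simp add: powr_mult powr_powr)
    finally show ?thesis .
  qed
  then show "\<exists>N. \<forall>n\<ge>N. norm (\<bar>b n\<bar> powr r) \<le> c powr r * real n powr (-(\<gamma> * r))"
    by (intro exI[of _ 1]) auto
qed

definition rosenthal_recursion ::
    "real \<Rightarrow> real \<Rightarrow> (nat \<Rightarrow> real) \<Rightarrow> real \<Rightarrow> real \<Rightarrow> (nat \<Rightarrow> real) \<Rightarrow> bool" where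
  "rosenthal_recursion p K b C0 c1 u \<longleftrightarrow> (\<forall>k\<ge>1.
     u k \<le> rosenthal_bound p K k (\<lambda>i. \<bar>b (k - i)\<bar> powr p * (if i = 0 then C0 else c1 * u i)))"

text \<open>Raising the recursion to the power \<open>q = min 1 (2/p)\<close> gives a linear convolution
  inequality for \<open>u\<^sup>q\<close> with kernel \<open>(K c1)\<^sup>q |b\<^sub>j|\<^sup>p\<^sup>q\<close>, whose total mass is \<open>(K c1 B\<^sub>p)\<^sup>q < 1\<close>.\<close>
lemma rosenthal_recursion_power_decay:
  fixes u b :: "nat \<Rightarrow> real"
  assumes p: "p \<ge> 1" and K: "K \<ge> 0" and c1: "c1 \<ge> 0" and C0: "C0 \<ge> 0" and u0: "\<And>k. u k \<ge> 0"
    and c: "c > 0" and \<gamma>: "\<gamma> > max (1/2) (1/p)" and bb: "\<forall>j\<ge>1. \<bar>b j\<bar> < c * real j powr (-\<gamma>)"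
    and contr: "K * c1 * Bp p b < 1"
    and rec: "rosenthal_recursion p K b C0 c1 u"
  shows "(\<lambda>k. u k powr (1 / p)) \<in> O(\<lambda>k. real k powr (-\<gamma>))"
proof -
  define q where "q = min 1 (2 / p)"
  define r where "r = min p 2"
  have q: "0 < q" using p by (simp add: q_def)
  have pq: "p * q = r" using p by (auto simp: q_def r_def min_def field_simps)
  have r: "r > 0" using p by (simp add: r_def)
  have \<gamma>r: "\<gamma> * r > 1" using \<gamma> p by (auto simp: r_def min_def field_simps)
  have sb: "summable (\<lambda>j. \<bar>b j\<bar> powr r)" by (rule summable_powr_of_power_bound[OF c r bb \<gamma>r])
  have powr_pq: "(\<bar>x\<bar> powr p) powr q = \<bar>x\<bar> powr r" for x using pq by (simp add: powr_powr)
  define a where "a j = (if j = 0 then 0 else (K * c1) powr q * \<bar>b j\<bar> powr r)" for j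
  define v where "v k = u k powr q" for k
  have a0: "a j \<ge> 0" for j by (simp add: a_def)
  have sa: "summable a"
  proof -
    have "summable (\<lambda>j. (K * c1) powr q * \<bar>b (Suc j)\<bar> powr r)"
      using summable_ignore_initial_segment[OF sb, of 1] by (intro summable_mult) simp
    then show ?thesis by (subst summable_Suc_iff[symmetric]) (simp add: a_def)
  qed
  have "a 0 = 0" by (simp add: a_def)
  then have "(\<Sum>j. a j) = (\<Sum>j. a (Suc j))" using suminf_split_head[OF sa] by simp
  also have "\<dots> = (K * c1) powr q * Bp p b powr q"
    using summable_ignore_initial_segment[OF sb, of 1] Bp_powr[OF p, of b] sb
    by (simp add: a_def suminf_mult q_def r_def)
  also have "\<dots> = (K * c1 * Bp p b) powr q"
    using K c1 Bp_nonneg[where p=p and b=b] sb by (simp add: powr_mult r_def)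
  also have "\<dots> < 1"
    using contr q K c1 Bp_nonneg[where p=p and b=b] sb powr_less_mono2[of q "K * c1 * Bp p b" 1]
    by (simp add: r_def)
  finally have suma: "(\<Sum>j. a j) < 1" .
  have aC: "a j \<le> ((K * c1) powr q * c powr r) * real j powr (-(\<gamma> * r))" if "j \<ge> 1" for j
  proof -
    have "\<bar>b j\<bar> powr r \<le> (c * real j powr (-\<gamma>)) powr r"
      using bb that r by (intro powr_mono2) (auto intro: less_imp_le)
    then show ?thesis
      using that c by (simp add: a_def powr_mult powr_powr mult.assoc mult_left_mono)
  qed
  have recv: "v k \<le> (K powr q * C0 powr q * c powr r) * real k powr (-(\<gamma> * r))
      + (\<Sum>s\<in>{1..<k}. a (k - s) * v s)" if k: "k \<ge> 1" for k
  proof -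
    let ?e = "\<lambda>i. \<bar>b (k - i)\<bar> powr p * (if i = 0 then C0 else c1 * u i)"
    have "v k \<le> rosenthal_bound p K k ?e powr q"
      unfolding v_def using rec k u0 q by (intro powr_mono2) (auto simp: rosenthal_recursion_def)
    also have "\<dots> = K powr q * (\<Sum>i<k. ?e i powr q)"
      unfolding q_def using p K C0 c1 u0 by (intro rosenthal_bound_powr) auto
    also have "(\<Sum>i<k. ?e i powr q) = ?e 0 powr q + (\<Sum>i\<in>{1..<k}. ?e i powr q)"
      using k by (simp add: lessThan_eq_insert_atLeastLessThan)
    also have "K powr q * (?e 0 powr q + (\<Sum>i\<in>{1..<k}. ?e i powr q))
        = K powr q * C0 powr q * \<bar>b k\<bar> powr r + (\<Sum>s\<in>{1..<k}. a (k - s) * v s)"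
      using C0 c1 u0 by (simp add: powr_mult powr_pq a_def v_def sum_distrib_left algebra_simps)
    also have "\<bar>b k\<bar> powr r \<le> c powr r * real k powr (-(\<gamma> * r))"
    proof -
      have "\<bar>b k\<bar> powr r \<le> (c * real k powr (-\<gamma>)) powr r"
        using bb k r by (intro powr_mono2) (auto intro: less_imp_le)
      then show ?thesis using c by (simp add: powr_mult powr_powr)
    qed
    finally show ?thesis using K C0 by (simp add: mult_left_mono mult.assoc)
  qed
  obtain B where B: "B \<ge> 0" "\<And>k. k \<ge> 1 \<Longrightarrow> v k \<le> B * real k powr (-(\<gamma> * r))"
    using convolution_inequality_power_decay[OF _ _ a0 sa suma aC recv] \<gamma>r u0 by (auto simp: v_def)
  have "u k powr (1 / p) \<le> B powr (1 / r) * real k powr (-\<gamma>)" if "k \<ge> 1" for k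
  proof -
    have "q / r = 1 / p" using q p by (simp flip: pq)
    then have "u k powr (1 / p) = v k powr (1 / r)" by (simp add: v_def powr_powr)
    also have "\<dots> \<le> (B * real k powr (-(\<gamma> * r))) powr (1 / r)"
      using B that r by (intro powr_mono2) (auto simp: v_def)
    also have "\<dots> = B powr (1 / r) * real k powr (-\<gamma>)"
      using B r by (simp add: powr_mult powr_powr)
    finally show ?thesis .
  qed
  then show ?thesis
    by (intro bigoI[of _ "B powr (1 / r)"] eventually_sequentiallyI[of 1]) auto
qed

section \<open>Limits in \<open>L\<^sup>p\<close>\<close>

lemma powr_abs_add_le:
  fixes x y p :: real assumes "p > 0"
  shows "\<bar>x + y\<bar> powr p \<le> 2 powr p * (\<bar>x\<bar> powr p + \<bar>y\<bar> powr p)"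
proof -
  define m where "m = max \<bar>x\<bar> \<bar>y\<bar>"
  have "\<bar>x\<bar> \<le> m" "\<bar>y\<bar> \<le> m" unfolding m_def by auto
  then have "\<bar>x + y\<bar> \<le> 2 * m" using abs_triangle_ineq[of x y] by linarith
  then have "\<bar>x + y\<bar> powr p \<le> (2 * m) powr p" using assms by (intro powr_mono2) auto
  also have "\<dots> = 2 powr p * m powr p" by (simp add: powr_mult m_def)
  also have "m powr p \<le> \<bar>x\<bar> powr p + \<bar>y\<bar> powr p"
  proof (cases "\<bar>x\<bar> \<le> \<bar>y\<bar>")
    case True then have "m = \<bar>y\<bar>" unfolding m_def by simp
    then show ?thesis by simp
  next
    case False then have "m = \<bar>x\<bar>" unfolding m_def by simp
    then show ?thesis by simp
  qed
  finally show ?thesis by simp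
qed

lemma abs_le_powr_eps:
  fixes x p e :: real assumes "p \<ge> 1" "e > 0"
  shows "\<bar>x\<bar> \<le> e + e powr (1 - p) * \<bar>x\<bar> powr p"
proof (cases "\<bar>x\<bar> \<le> e")
  case True
  have "0 \<le> e powr (1 - p) * \<bar>x\<bar> powr p" by simp
  then show ?thesis using True by linarith
next
  case False
  then have xp: "\<bar>x\<bar> > 0" using assms by auto
  have ep: "e powr (p - 1) > 0" using assms by simp
  have "e powr (p - 1) \<le> \<bar>x\<bar> powr (p - 1)" using False assms by (intro powr_mono2) auto
  then have "\<bar>x\<bar> * e powr (p - 1) \<le> \<bar>x\<bar> * \<bar>x\<bar> powr (p - 1)" using xp by simp
  also have "\<bar>x\<bar> * \<bar>x\<bar> powr (p - 1) = \<bar>x\<bar> powr p" using xp by (simp add: powr_mult_base)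
  finally have "\<bar>x\<bar> \<le> \<bar>x\<bar> powr p / e powr (p - 1)" using ep by (simp add: pos_le_divide_eq)
  also have "\<bar>x\<bar> powr p / e powr (p - 1) = e powr (1 - p) * \<bar>x\<bar> powr p"
  proof -
    have "e powr (1 - p) = inverse (e powr (p - 1))"
      using assms by (simp add: powr_minus[symmetric])
    then show ?thesis by (simp add: divide_inverse mult.commute)
  qed
  finally show ?thesis using assms by simp
qed

lemma integrable_powr_add:
  fixes f g :: "'a \<Rightarrow> real"
  assumes p: "p > 0" and m: "f \<in> borel_measurable M" "g \<in> borel_measurable M"
    and i: "integrable M (\<lambda>\<omega>. \<bar>f \<omega>\<bar> powr p)" "integrable M (\<lambda>\<omega>. \<bar>g \<omega>\<bar> powr p)"
  shows "integrable M (\<lambda>\<omega>. \<bar>f \<omega> + g \<omega>\<bar> powr p)"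
proof (rule Bochner_Integration.integrable_bound)
  show "integrable M (\<lambda>\<omega>. 2 powr p * (\<bar>f \<omega>\<bar> powr p + \<bar>g \<omega>\<bar> powr p))" using i by auto
  show "AE x in M. norm (\<bar>f x + g x\<bar> powr p) \<le> norm (2 powr p * (\<bar>f x\<bar> powr p + \<bar>g x\<bar> powr p))"
    using powr_abs_add_le[OF p] by auto
qed (use m in auto)

lemma integrable_powr_sum:
  fixes f :: "'i \<Rightarrow> 'a \<Rightarrow> real"
  assumes p: "p > 0" and "finite I" and m: "\<And>i. i \<in> I \<Longrightarrow> f i \<in> borel_measurable M"
    and i: "\<And>i. i \<in> I \<Longrightarrow> integrable M (\<lambda>\<omega>. \<bar>f i \<omega>\<bar> powr p)"
  shows "integrable M (\<lambda>\<omega>. \<bar>\<Sum>i\<in>I. f i \<omega>\<bar> powr p)"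
  using assms(2) m i
proof (induction I rule: finite_induct)
  case empty then show ?case using p by simp
next
  case (insert x F)
  have "integrable M (\<lambda>\<omega>. \<bar>f x \<omega> + (\<Sum>i\<in>F. f i \<omega>)\<bar> powr p)"
    by (rule integrable_powr_add[OF p]) (use insert in auto)
  then show ?case using insert by simp
qed

lemma integrable_powr_cmult:
  fixes f :: "'a \<Rightarrow> real"
  assumes "integrable M (\<lambda>\<omega>. \<bar>f \<omega>\<bar> powr p)"
  shows "integrable M (\<lambda>\<omega>. \<bar>c * f \<omega>\<bar> powr p)"
proof -
  have "integrable M (\<lambda>\<omega>. \<bar>c\<bar> powr p * \<bar>f \<omega>\<bar> powr p)" using assms by auto
  then show ?thesis by (simp add: abs_mult powr_mult)
qed

context prob_space
begin

lemma integrable_of_integrable_powr: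
  fixes f :: "'a \<Rightarrow> real"
  assumes "p \<ge> 1" "f \<in> borel_measurable M" "integrable M (\<lambda>\<omega>. \<bar>f \<omega>\<bar> powr p)"
  shows "integrable M f"
proof -
  have "integrable M (\<lambda>\<omega>. 1 + \<bar>f \<omega>\<bar> powr p)" using assms(3) by simp
  then show ?thesis
  proof (rule Bochner_Integration.integrable_bound)
    show "AE x in M. norm (f x) \<le> norm (1 + \<bar>f x\<bar> powr p)"
      using abs_le_powr_eps[OF assms(1), of 1] by auto
  qed (rule assms(2))
qed

lemma nn_integral_powr_add_le:
  fixes A B :: "'a \<Rightarrow> real"
  assumes "p > 0" "A \<in> borel_measurable M" "B \<in> borel_measurable M"
  shows "(\<integral>\<^sup>+\<omega>. ennreal (\<bar>A \<omega> + B \<omega>\<bar> powr p) \<partial>M)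
    \<le> ennreal (2 powr p) * ((\<integral>\<^sup>+\<omega>. ennreal (\<bar>A \<omega>\<bar> powr p) \<partial>M) + (\<integral>\<^sup>+\<omega>. ennreal (\<bar>B \<omega>\<bar> powr p) \<partial>M))"
proof -
  have "(\<integral>\<^sup>+\<omega>. ennreal (\<bar>A \<omega> + B \<omega>\<bar> powr p) \<partial>M)
     \<le> (\<integral>\<^sup>+\<omega>. ennreal (2 powr p) * (ennreal (\<bar>A \<omega>\<bar> powr p) + ennreal (\<bar>B \<omega>\<bar> powr p)) \<partial>M)"
  proof (rule nn_integral_mono)
    fix \<omega>
    have "ennreal (\<bar>A \<omega> + B \<omega>\<bar> powr p) \<le> ennreal (2 powr p * (\<bar>A \<omega>\<bar> powr p + \<bar>B \<omega>\<bar> powr p))"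
      by (rule ennreal_leI, rule powr_abs_add_le[OF assms(1)])
    then show "ennreal (\<bar>A \<omega> + B \<omega>\<bar> powr p) \<le> ennreal (2 powr p) * (ennreal (\<bar>A \<omega>\<bar> powr p) + ennreal (\<bar>B \<omega>\<bar> powr p))"
      by (simp add: ennreal_mult ennreal_plus)
  qed
  also have "\<dots> = ennreal (2 powr p) * ((\<integral>\<^sup>+\<omega>. ennreal (\<bar>A \<omega>\<bar> powr p) \<partial>M) + (\<integral>\<^sup>+\<omega>. ennreal (\<bar>B \<omega>\<bar> powr p) \<partial>M))"
    using assms by (simp add: nn_integral_cmult nn_integral_add)
  finally show ?thesis .
qed

lemma AE_diff_of_Lp_limits:
  fixes A B D :: "'a \<Rightarrow> real" and S T :: "nat \<Rightarrow> 'a \<Rightarrow> real"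
  assumes p: "p > 0" and meas: "A \<in> borel_measurable M" "B \<in> borel_measurable M" "D \<in> borel_measurable M"
    "\<And>n. S n \<in> borel_measurable M" "\<And>n. T n \<in> borel_measurable M"
    and limA: "(\<lambda>n. \<integral>\<^sup>+\<omega>. ennreal (\<bar>A \<omega> - S n \<omega>\<bar> powr p) \<partial>M) \<longlonglongrightarrow> 0"
    and limB: "(\<lambda>n. \<integral>\<^sup>+\<omega>. ennreal (\<bar>B \<omega> - T n \<omega>\<bar> powr p) \<partial>M) \<longlonglongrightarrow> 0"
    and eq: "\<And>n \<omega>. n \<ge> N \<Longrightarrow> S n \<omega> - T n \<omega> = D \<omega>"
  shows "AE \<omega> in M. A \<omega> - B \<omega> = D \<omega>"
proof -
  let ?I = "\<integral>\<^sup>+\<omega>. ennreal (\<bar>A \<omega> - B \<omega> - D \<omega>\<bar> powr p) \<partial>M"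
  let ?R = "\<lambda>n. ennreal (2 powr p) * ((\<integral>\<^sup>+\<omega>. ennreal (\<bar>A \<omega> - S n \<omega>\<bar> powr p) \<partial>M) + (\<integral>\<^sup>+\<omega>. ennreal (\<bar>B \<omega> - T n \<omega>\<bar> powr p) \<partial>M))"
  have le: "?I \<le> ?R n" if "n \<ge> N" for n
  proof -
    have "?I = (\<integral>\<^sup>+\<omega>. ennreal (\<bar>(A \<omega> - S n \<omega>) + (T n \<omega> - B \<omega>)\<bar> powr p) \<partial>M)"
    proof (intro nn_integral_cong)
      fix \<omega>
      have e: "A \<omega> - B \<omega> - D \<omega> = (A \<omega> - S n \<omega>) + (T n \<omega> - B \<omega>)" using eq[OF that, of \<omega>] by simp
      show "ennreal (\<bar>A \<omega> - B \<omega> - D \<omega>\<bar> powr p) = ennreal (\<bar>(A \<omega> - S n \<omega>) + (T n \<omega> - B \<omega>)\<bar> powr p)"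
        by (simp only: e)
    qed
    also have "\<dots> \<le> ennreal (2 powr p) * ((\<integral>\<^sup>+\<omega>. ennreal (\<bar>A \<omega> - S n \<omega>\<bar> powr p) \<partial>M) + (\<integral>\<^sup>+\<omega>. ennreal (\<bar>T n \<omega> - B \<omega>\<bar> powr p) \<partial>M))"
      by (rule nn_integral_powr_add_le[OF p]) (use meas in auto)
    also have "(\<lambda>\<omega>. \<bar>T n \<omega> - B \<omega>\<bar>) = (\<lambda>\<omega>. \<bar>B \<omega> - T n \<omega>\<bar>)" by (simp add: abs_minus_commute)
    finally show ?thesis .
  qed
  have "?R \<longlonglongrightarrow> ennreal (2 powr p) * (0 + 0)"
    by (intro tendsto_intros limA limB) auto
  then have "?I \<le> 0" using le by (intro LIMSEQ_le_const[of ?R]) auto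
  then have "?I = 0" by simp
  then have "AE \<omega> in M. ennreal (\<bar>A \<omega> - B \<omega> - D \<omega>\<bar> powr p) = 0"
    by (subst (asm) nn_integral_0_iff_AE) (use meas in auto)
  then show ?thesis
  proof (rule AE_mp, intro AE_I2 impI)
    fix \<omega> assume "ennreal (\<bar>A \<omega> - B \<omega> - D \<omega>\<bar> powr p) = 0"
    then have "\<bar>A \<omega> - B \<omega> - D \<omega>\<bar> powr p = 0" by (simp add: ennreal_eq_0_iff)
    then show "A \<omega> - B \<omega> = D \<omega>" using p by simp
  qed
qed

lemma integrable_powr_of_Lp_limit:
  fixes Z :: "'a \<Rightarrow> real" and S :: "nat \<Rightarrow> 'a \<Rightarrow> real"
  assumes p: "p \<ge> 1" and Zm: "Z \<in> borel_measurable M" and Sm: "\<And>n. S n \<in> borel_measurable M"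
    and Sint: "\<And>n. integrable M (\<lambda>\<omega>. \<bar>S n \<omega>\<bar> powr p)"
    and lim: "(\<lambda>n. \<integral>\<^sup>+\<omega>. ennreal (\<bar>Z \<omega> - S n \<omega>\<bar> powr p) \<partial>M) \<longlonglongrightarrow> 0"
  shows "integrable M (\<lambda>\<omega>. \<bar>Z \<omega>\<bar> powr p)"
proof -
  have "eventually (\<lambda>n. (\<integral>\<^sup>+\<omega>. ennreal (\<bar>Z \<omega> - S n \<omega>\<bar> powr p) \<partial>M) < 1) sequentially"
    using lim by (rule order_tendstoD) simp
  then obtain N where "(\<integral>\<^sup>+\<omega>. ennreal (\<bar>Z \<omega> - S N \<omega>\<bar> powr p) \<partial>M) < 1"
    by (auto simp: eventually_sequentially)
  then have N: "(\<integral>\<^sup>+\<omega>. ennreal (\<bar>Z \<omega> - S N \<omega>\<bar> powr p) \<partial>M) < \<infinity>"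
    by (rule order.strict_trans) simp
  have SN: "(\<integral>\<^sup>+\<omega>. ennreal (\<bar>S N \<omega>\<bar> powr p) \<partial>M) < \<infinity>"
    using Sint[of N] by (auto simp: integrable_iff_bounded)
  have "(\<integral>\<^sup>+\<omega>. ennreal (\<bar>(Z \<omega> - S N \<omega>) + S N \<omega>\<bar> powr p) \<partial>M)
     \<le> ennreal (2 powr p) * ((\<integral>\<^sup>+\<omega>. ennreal (\<bar>Z \<omega> - S N \<omega>\<bar> powr p) \<partial>M) + (\<integral>\<^sup>+\<omega>. ennreal (\<bar>S N \<omega>\<bar> powr p) \<partial>M))"
    by (rule nn_integral_powr_add_le) (use p Zm Sm in auto)
  also have "\<dots> < \<infinity>" using N SN by (simp add: ennreal_mult_less_top)
  finally show ?thesis by (intro integrableI_bounded) (use Zm in auto)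
qed

lemma nn_integral_abs_le_powr_eps:
  fixes f :: "'a \<Rightarrow> real"
  assumes p: "p \<ge> 1" and e: "e > 0" and f: "f \<in> borel_measurable M"
  shows "(\<integral>\<^sup>+\<omega>. ennreal \<bar>f \<omega>\<bar> \<partial>M) \<le> ennreal e + ennreal (e powr (1 - p)) * (\<integral>\<^sup>+\<omega>. ennreal (\<bar>f \<omega>\<bar> powr p) \<partial>M)"
proof -
  have "(\<integral>\<^sup>+\<omega>. ennreal \<bar>f \<omega>\<bar> \<partial>M) \<le> (\<integral>\<^sup>+\<omega>. ennreal e + ennreal (e powr (1 - p)) * ennreal (\<bar>f \<omega>\<bar> powr p) \<partial>M)"
  proof (rule nn_integral_mono)
    fix \<omega>
    have "ennreal \<bar>f \<omega>\<bar> \<le> ennreal (e + e powr (1 - p) * \<bar>f \<omega>\<bar> powr p)"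
      by (rule ennreal_leI, rule abs_le_powr_eps[OF p e])
    then show "ennreal \<bar>f \<omega>\<bar> \<le> ennreal e + ennreal (e powr (1 - p)) * ennreal (\<bar>f \<omega>\<bar> powr p)"
      using e by (simp add: ennreal_plus ennreal_mult)
  qed
  also have "\<dots> = (\<integral>\<^sup>+\<omega>. ennreal e \<partial>M) + ennreal (e powr (1 - p)) * (\<integral>\<^sup>+\<omega>. ennreal (\<bar>f \<omega>\<bar> powr p) \<partial>M)"
    by (subst nn_integral_add) (use f in \<open>auto simp: nn_integral_cmult\<close>)
  also have "(\<integral>\<^sup>+\<omega>. ennreal e \<partial>M) = ennreal e" using emeasure_space_1 by simp
  finally show ?thesis .
qed

end

lemma (in sigma_finite_subalgebra) nn_integral_abs_diff_real_cond_exp_le: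
  fixes Z S :: "'a \<Rightarrow> real"
  assumes Z: "integrable M Z" and S: "integrable M S" "S \<in> borel_measurable F"
  shows "(\<integral>\<^sup>+\<omega>. ennreal \<bar>Z \<omega> - real_cond_exp M F Z \<omega>\<bar> \<partial>M) \<le> 2 * (\<integral>\<^sup>+\<omega>. ennreal \<bar>Z \<omega> - S \<omega>\<bar> \<partial>M)"
proof -
  let ?Z' = "real_cond_exp M F Z"
  have Zm: "Z \<in> borel_measurable M" and Sm: "S \<in> borel_measurable M" using Z S by auto
  have Z'm: "?Z' \<in> borel_measurable M" using measurable_from_subalg[OF subalg] by simp
  have "AE \<omega> in M. real_cond_exp M F (\<lambda>x. S x - Z x) \<omega> = S \<omega> - ?Z' \<omega>"
    using real_cond_exp_diff[OF S(1) Z] real_cond_exp_F_meas[OF S] by eventually_elim auto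
  then have "(\<integral>\<^sup>+\<omega>. ennreal \<bar>S \<omega> - ?Z' \<omega>\<bar> \<partial>M) = (\<integral>\<^sup>+\<omega>. ennreal \<bar>real_cond_exp M F (\<lambda>x. S x - Z x) \<omega>\<bar> \<partial>M)"
    by (intro nn_integral_cong_AE) auto
  also have "\<dots> \<le> (\<integral>\<^sup>+\<omega>. nn_cond_exp M F (\<lambda>x. ennreal \<bar>S x - Z x\<bar>) \<omega> \<partial>M)"
    by (rule nn_integral_mono_AE) (rule real_cond_exp_abs, use Sm Zm in auto)
  also have "\<dots> = (\<integral>\<^sup>+\<omega>. 1 * nn_cond_exp M F (\<lambda>x. ennreal \<bar>S x - Z x\<bar>) \<omega> \<partial>M)" by simp
  also have "\<dots> = (\<integral>\<^sup>+\<omega>. 1 * ennreal \<bar>S \<omega> - Z \<omega>\<bar> \<partial>M)"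
    by (rule nn_cond_exp_intg) (use Sm Zm in auto)
  finally have SZ': "(\<integral>\<^sup>+\<omega>. ennreal \<bar>S \<omega> - ?Z' \<omega>\<bar> \<partial>M) \<le> (\<integral>\<^sup>+\<omega>. ennreal \<bar>Z \<omega> - S \<omega>\<bar> \<partial>M)"
    by (simp add: abs_minus_commute)
  have "(\<integral>\<^sup>+\<omega>. ennreal \<bar>Z \<omega> - ?Z' \<omega>\<bar> \<partial>M) \<le> (\<integral>\<^sup>+\<omega>. ennreal \<bar>Z \<omega> - S \<omega>\<bar> + ennreal \<bar>S \<omega> - ?Z' \<omega>\<bar> \<partial>M)"
    by (rule nn_integral_mono) (simp add: ennreal_plus[symmetric] del: ennreal_plus)
  also have "\<dots> = (\<integral>\<^sup>+\<omega>. ennreal \<bar>Z \<omega> - S \<omega>\<bar> \<partial>M) + (\<integral>\<^sup>+\<omega>. ennreal \<bar>S \<omega> - ?Z' \<omega>\<bar> \<partial>M)"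
    by (rule nn_integral_add) (use Sm Zm Z'm in auto)
  also have "\<dots> \<le> 2 * (\<integral>\<^sup>+\<omega>. ennreal \<bar>Z \<omega> - S \<omega>\<bar> \<partial>M)"
    using SZ' by (simp add: mult_2 add_left_mono)
  finally show ?thesis .
qed

text \<open>An \<open>L\<^sup>p\<close>-limit of \<open>F\<close>-measurable functions agrees a.e. with its conditional expectation
  given \<open>F\<close>, since its \<open>L\<^sup>1\<close>-distance to it is at most twice that to any \<open>F\<close>-measurable function.\<close>
lemma (in prob_space) Lp_limit_AE_eq_measurable:
  fixes Z :: "'a \<Rightarrow> real" and S :: "nat \<Rightarrow> 'a \<Rightarrow> real"
  assumes F: "sigma_finite_subalgebra M F" and p: "p \<ge> 1" and Zm: "Z \<in> borel_measurable M"
    and SF: "\<And>n. S n \<in> borel_measurable F" and Sint: "\<And>n. integrable M (\<lambda>\<omega>. \<bar>S n \<omega>\<bar> powr p)"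
    and lim: "(\<lambda>n. \<integral>\<^sup>+\<omega>. ennreal (\<bar>Z \<omega> - S n \<omega>\<bar> powr p) \<partial>M) \<longlonglongrightarrow> 0"
  shows "\<exists>Z'\<in>borel_measurable F. AE \<omega> in M. Z \<omega> = Z' \<omega>"
proof -
  interpret sigma_finite_subalgebra M F by (rule F)
  have Sm: "S n \<in> borel_measurable M" for n using SF measurable_from_subalg[OF subalg] by blast
  have Zint: "integrable M Z"
    by (rule integrable_of_integrable_powr[OF p Zm integrable_powr_of_Lp_limit[OF p Zm Sm Sint lim]])
  have SI: "integrable M (S n)" for n by (rule integrable_of_integrable_powr[OF p Sm Sint])
  define Z' where "Z' = real_cond_exp M F Z"
  have Z'M: "Z' \<in> borel_measurable M" unfolding Z'_def using measurable_from_subalg[OF subalg] by simp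
  have small: "(\<integral>\<^sup>+\<omega>. ennreal \<bar>Z \<omega> - Z' \<omega>\<bar> \<partial>M) \<le> 0 + ennreal e" if e: "e > 0" for e
  proof -
    let ?R = "\<lambda>n. 2 * (ennreal (e/2) + ennreal ((e/2) powr (1 - p)) * (\<integral>\<^sup>+\<omega>. ennreal (\<bar>Z \<omega> - S n \<omega>\<bar> powr p) \<partial>M))"
    have "?R \<longlonglongrightarrow> 2 * (ennreal (e/2) + ennreal ((e/2) powr (1 - p)) * 0)"
      by (intro tendsto_intros lim) auto
    moreover have "(\<integral>\<^sup>+\<omega>. ennreal \<bar>Z \<omega> - Z' \<omega>\<bar> \<partial>M) \<le> ?R n" for n
    proof -
      have "(\<integral>\<^sup>+\<omega>. ennreal \<bar>Z \<omega> - Z' \<omega>\<bar> \<partial>M) \<le> 2 * (\<integral>\<^sup>+\<omega>. ennreal \<bar>Z \<omega> - S n \<omega>\<bar> \<partial>M)"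
        unfolding Z'_def by (rule nn_integral_abs_diff_real_cond_exp_le[OF Zint SI SF])
      also have "\<dots> \<le> ?R n"
        using nn_integral_abs_le_powr_eps[OF p _, of "e/2" "\<lambda>\<omega>. Z \<omega> - S n \<omega>"] e Zm Sm
        by (intro mult_left_mono) auto
      finally show ?thesis .
    qed
    ultimately have "(\<integral>\<^sup>+\<omega>. ennreal \<bar>Z \<omega> - Z' \<omega>\<bar> \<partial>M) \<le> 2 * (ennreal (e/2) + ennreal ((e/2) powr (1 - p)) * 0)"
      by (intro LIMSEQ_le_const) auto
    also have "\<dots> = ennreal e"
      using e ennreal_mult[of 2 "e/2"] by simp
    finally show ?thesis by simp
  qed
  have "(\<integral>\<^sup>+\<omega>. ennreal \<bar>Z \<omega> - Z' \<omega>\<bar> \<partial>M) \<le> 0"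
    by (rule ennreal_le_epsilon) (rule small)
  then have "(\<integral>\<^sup>+\<omega>. ennreal \<bar>Z \<omega> - Z' \<omega>\<bar> \<partial>M) = 0" by simp
  then have "AE \<omega> in M. ennreal \<bar>Z \<omega> - Z' \<omega>\<bar> = 0"
    by (subst (asm) nn_integral_0_iff_AE) (use Zm Z'M in auto)
  then have "AE \<omega> in M. Z \<omega> = Z' \<omega>" by eventually_elim simp
  then show ?thesis unfolding Z'_def by (intro bexI[of _ Z']) (auto simp: Z'_def)
qed

section \<open>Coordinates of the product space\<close>

definition coord_algebra :: "int option set \<Rightarrow> omega measure" where
  "coord_algebra J = vimage_algebra UNIV (\<lambda>\<omega>. restrict \<omega> J) (PiM J (\<lambda>_. borel))"

lemma space_coord_algebra[simp]: "space (coord_algebra J) = UNIV" by (simp add: coord_algebra_def)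

lemma measurable_restrict_coord_algebra: "(\<lambda>\<omega>. restrict \<omega> J) \<in> measurable (coord_algebra J) (PiM J (\<lambda>_. borel))"
  unfolding coord_algebra_def by (rule measurable_vimage_algebra1) (auto simp: space_PiM)

lemma sets_coord_algebra: "sets (coord_algebra J) = {(\<lambda>\<omega>. restrict \<omega> J) -` B | B. B \<in> sets (PiM J (\<lambda>_. borel))}"
  unfolding coord_algebra_def by (subst sets_vimage_algebra2) (auto simp: space_PiM)

lemma measurable_coord_algebra_restrict: "\<phi> \<in> measurable (PiM J (\<lambda>_. borel)) N \<Longrightarrow> (\<lambda>\<omega>. \<phi> (restrict \<omega> J)) \<in> measurable (coord_algebra J) N"
  using measurable_comp[OF measurable_restrict_coord_algebra] by (auto simp: comp_def)

lemma measurable_id_coord_algebra: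
  assumes "J \<subseteq> K" shows "(\<lambda>x. x) \<in> measurable (coord_algebra K) (coord_algebra J)"
  unfolding coord_algebra_def[of J]
proof (rule measurable_vimage_algebra2)
  have eq: "(\<lambda>x. restrict (restrict x K) J) = (\<lambda>x. restrict x J)"
    using assms by (auto simp: fun_eq_iff restrict_def)
  have "(\<lambda>x. restrict (restrict x K) J) \<in> measurable (coord_algebra K) (PiM J (\<lambda>_. borel))"
    by (rule measurable_coord_algebra_restrict, rule measurable_restrict_subset[OF assms])
  then show "(\<lambda>x. restrict x J) \<in> measurable (coord_algebra K) (PiM J (\<lambda>_. borel))" unfolding eq .
qed simp

lemma sets_coord_algebra_mono: "J \<subseteq> K \<Longrightarrow> sets (coord_algebra J) \<subseteq> sets (coord_algebra K)"
  using measurable_sets[OF measurable_id_coord_algebra] by fastforce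

lemma measurable_coord_algebra_mono:
  assumes "J \<subseteq> K" "f \<in> measurable (coord_algebra J) N" shows "f \<in> measurable (coord_algebra K) N"
  using measurable_comp[OF measurable_id_coord_algebra[OF assms(1)] assms(2)] by (simp add: comp_def)

lemma measurable_coord_coord_algebra[measurable]: "i \<in> J \<Longrightarrow> (\<lambda>\<omega>. \<omega> i) \<in> borel_measurable (coord_algebra J)"
  using measurable_coord_algebra_restrict[of "\<lambda>x. x i" J borel] by (simp add: measurable_component_singleton)

lemma measurable_reindex_coord_algebra:
  assumes idx: "\<And>j. idx j \<in> J" and g: "g \<in> borel_measurable (PiM UNIV (\<lambda>_::nat. borel))"
  shows "(\<lambda>\<omega>. g (\<lambda>j. \<omega> (idx j))) \<in> borel_measurable (coord_algebra J)"
proof -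
  have "(\<lambda>x j. x (idx j)) \<in> measurable (PiM J (\<lambda>_. borel)) (PiM UNIV (\<lambda>_::nat. borel))"
    by (rule measurable_PiM_single') (auto intro!: measurable_component_singleton idx)
  then have "(\<lambda>x. g (\<lambda>j. x (idx j))) \<in> borel_measurable (PiM J (\<lambda>_. borel))"
    using g by measurable
  from measurable_coord_algebra_restrict[OF this] show ?thesis using idx by simp
qed

definition swap_idx :: "int option \<Rightarrow> int option" where
  "swap_idx i = (if i = None then Some 0 else if i = Some 0 then None else i)"

text \<open>\<open>resample\<close> exchanges the coordinates \<open>Some 0\<close> and \<open>None\<close>, i.e. replaces \<open>\<zeta>\<^sub>0\<close> by \<open>\<zeta>\<^sub>0'\<close>.\<close>
definition resample :: "omega \<Rightarrow> omega" where
  "resample \<omega> = (\<lambda>i. \<omega> (swap_idx i))"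

lemma swap_idx_swap_idx[simp]: "swap_idx (swap_idx i) = i" by (auto simp: swap_idx_def)

lemma inj_swap_idx: "inj swap_idx" by (metis injI swap_idx_swap_idx)

lemma resample_Some[simp]: "t \<noteq> 0 \<Longrightarrow> resample \<omega> (Some t) = \<omega> (Some t)"
  by (simp add: resample_def swap_idx_def)

lemma resample_Some0[simp]: "resample \<omega> (Some 0) = \<omega> None" by (simp add: resample_def swap_idx_def)

lemma resample_None[simp]: "resample \<omega> None = \<omega> (Some 0)" by (simp add: resample_def swap_idx_def)

lemma past'_eq_past_resample: "past' \<omega> t = past (resample \<omega>) t"
  by (auto simp: past'_def past_def fun_eq_iff)

lemma past_resample_neg: "s < 0 \<Longrightarrow> past (resample \<omega>) s = past \<omega> s"
  by (auto simp: past_def fun_eq_iff)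

text \<open>The coordinates generating the filtration: \<open>\<zeta>\<^sub>s\<close> for \<open>s < n\<close>, and \<open>\<zeta>\<^sub>0'\<close> once \<open>n \<ge> 1\<close>.\<close>
definition past_coords :: "nat \<Rightarrow> int option set" where
  "past_coords n = {Some t | t. t < int n} \<union> (if n \<ge> 1 then {None} else {})"

lemma past_coords_mono: "i \<le> j \<Longrightarrow> past_coords i \<subseteq> past_coords j"
  by (auto simp: past_coords_def)

lemma swap_idx_Some_in_past_coords: "s < int n \<Longrightarrow> n \<ge> 1 \<Longrightarrow> swap_idx (Some s) \<in> past_coords n"
  by (auto simp: swap_idx_def past_coords_def)

lemma measurable_past_coord_algebra:
  assumes "\<And>j. Some (s - int j) \<in> J" "g \<in> borel_measurable (PiM UNIV (\<lambda>_::nat. borel))"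
  shows "(\<lambda>\<omega>. g (past \<omega> s)) \<in> borel_measurable (coord_algebra J)"
  using measurable_reindex_coord_algebra[of "\<lambda>j. Some (s - int j)" J g] assms by (simp add: past_def[abs_def])

lemma measurable_past_resample_coord_algebra:
  assumes "\<And>j. swap_idx (Some (s - int j)) \<in> J" "g \<in> borel_measurable (PiM UNIV (\<lambda>_::nat. borel))"
  shows "(\<lambda>\<omega>. g (past (resample \<omega>) s)) \<in> borel_measurable (coord_algebra J)"
  using measurable_reindex_coord_algebra[of "\<lambda>j. swap_idx (Some (s - int j))" J g] assms by (simp add: past_def[abs_def] resample_def)

locale iid =
  fixes \<mu> :: "real measure"
  assumes prob_mu: "prob_space \<mu>" and sets_mu: "sets \<mu> = sets borel"
begin

abbreviation "M \<equiv> iid_space \<mu>"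

lemma space_mu[simp]: "space \<mu> = UNIV"
  using sets_eq_imp_space_eq[OF sets_mu] by simp

lemma space_M[simp]: "space M = UNIV"
  by (simp add: iid_space_def space_PiM)

lemma prob_space_M: "prob_space M"
  unfolding iid_space_def by (rule prob_space_PiM) (simp add: prob_mu)

sublocale prob_space M by (rule prob_space_M)

lemma sets_M: "sets M = sets (PiM UNIV (\<lambda>_. borel))"
  unfolding iid_space_def by (rule sets_PiM_cong) (auto simp: sets_mu)

lemma measurable_M_iff: "measurable M N = measurable (PiM UNIV (\<lambda>_::int option. borel)) N"
  by (rule measurable_cong_sets[OF sets_M refl])

lemma measurable_coord[measurable]: "(\<lambda>\<omega>. \<omega> i) \<in> borel_measurable M"
  unfolding measurable_M_iff by measurable

lemma distr_coord: "distr M \<mu> (\<lambda>\<omega>. \<omega> i) = \<mu>"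
  unfolding iid_space_def by (rule distr_PiM_component) (auto simp: prob_mu)

lemma measurable_coord_mu: "(\<lambda>\<omega>. \<omega> i) \<in> measurable M \<mu>"
  unfolding iid_space_def by (rule measurable_component_singleton) simp

lemma integrable_coord_comp:
  fixes f :: "real \<Rightarrow> real"
  assumes "f \<in> borel_measurable borel"
  shows "integrable M (\<lambda>\<omega>. f (\<omega> i)) \<longleftrightarrow> integrable \<mu> f"
proof -
  have fm: "f \<in> borel_measurable \<mu>" using assms by (simp add: measurable_cong_sets[OF sets_mu refl])
  show ?thesis using integrable_distr_eq[OF measurable_coord_mu fm] by (simp add: distr_coord)
qed

lemma integral_coord_comp:
  fixes f :: "real \<Rightarrow> real"
  assumes "f \<in> borel_measurable borel"
  shows "(\<integral>\<omega>. f (\<omega> i) \<partial>M) = (\<integral>x. f x \<partial>\<mu>)"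
proof -
  have fm: "f \<in> borel_measurable \<mu>" using assms by (simp add: measurable_cong_sets[OF sets_mu refl])
  show ?thesis using integral_distr[OF measurable_coord_mu fm] by (simp add: distr_coord)
qed

lemma measurable_restrict_M: "(\<lambda>\<omega>. restrict \<omega> J) \<in> measurable M (PiM J (\<lambda>_. borel))"
  unfolding measurable_M_iff by (rule measurable_restrict_subset) simp

lemma subalgebra_coord_algebra: "subalgebra M (coord_algebra J)"
  unfolding subalgebra_def
proof
  show "sets (coord_algebra J) \<subseteq> sets M"
    unfolding sets_coord_algebra using measurable_sets[OF measurable_restrict_M] by auto
qed simp

lemma sigma_finite_subalgebra_coord_algebra: "sigma_finite_subalgebra M (coord_algebra J)"
proof -
  interpret finite_measure_subalgebra M "coord_algebra J" by unfold_locales (rule subalgebra_coord_algebra)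
  show ?thesis by (rule finite_measure_subalgebra_is_sigma_finite) unfold_locales
qed

lemma measurable_coord_algebraD: "f \<in> measurable (coord_algebra J) N \<Longrightarrow> f \<in> measurable M N"
  using measurable_from_subalg[OF subalgebra_coord_algebra] by blast

lemma indep_coords: "prob_space.indep_vars M (\<lambda>_. \<mu>) (\<lambda>i \<omega>. \<omega> i) UNIV"
proof -
  have rv: "random_variable \<mu> (\<lambda>\<omega>. \<omega> i)" for i
    unfolding iid_space_def by (rule measurable_component_singleton) simp
  have "distr M (PiM UNIV (\<lambda>_. \<mu>)) (\<lambda>x. \<lambda>i\<in>UNIV. x i) = PiM UNIV (\<lambda>i. distr M \<mu> (\<lambda>\<omega>. \<omega> i))"
  proof -
    have "distr M (PiM UNIV (\<lambda>_. \<mu>)) (\<lambda>x. \<lambda>i\<in>UNIV. x i) = distr M M (\<lambda>x. x)"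
      by (simp add: iid_space_def restrict_def)
    also have "\<dots> = M" by simp
    also have "\<dots> = PiM UNIV (\<lambda>i. distr M \<mu> (\<lambda>\<omega>. \<omega> i))"
      unfolding iid_space_def
      by (subst distr_PiM_component) (auto simp: prob_mu)
    finally show ?thesis .
  qed
  then show ?thesis by (subst indep_vars_iff_distr_eq_PiM[OF _ rv]) auto
qed

lemma indep_var_coord_algebra:
  assumes "J \<inter> K = {}" "f \<in> borel_measurable (coord_algebra J)" "g \<in> borel_measurable (coord_algebra K)"
  shows "prob_space.indep_var M borel f borel g"
proof -
  define KK where "KK = (\<lambda>b. if b then J else K)"
  have "indep_vars (\<lambda>b. PiM (KK b) (\<lambda>_. \<mu>)) (\<lambda>b \<omega>. restrict (\<lambda>i. \<omega> i) (KK b)) UNIV"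
    by (rule indep_vars_restrict[OF indep_coords]) (use assms(1) in \<open>auto simp: disjoint_family_on_def KK_def\<close>)
  then have ind: "indep_sets (\<lambda>b. sigma_sets UNIV {(\<lambda>\<omega>. restrict \<omega> (KK b)) -` A | A. A \<in> sets (PiM (KK b) (\<lambda>_. \<mu>))}) UNIV"
    by (simp add: indep_vars_def)
  have sPi: "sets (PiM L (\<lambda>_. \<mu>)) = sets (PiM L (\<lambda>_. borel))" for L
    by (rule sets_PiM_cong) (auto simp: sets_mu)
  show ?thesis
    unfolding indep_var_def indep_vars_def
  proof
    show "\<forall>i\<in>UNIV. random_variable (case_bool borel borel i) (case_bool f g i)"
      using measurable_coord_algebraD assms(2,3) by (auto split: bool.split)
    show "indep_sets (\<lambda>i. sigma_sets (space M) {case_bool f g i -` A \<inter> space M |A. A \<in> sets (case_bool borel borel i)}) UNIV"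
    proof (rule indep_sets_mono_sets[OF ind])
      fix b :: bool
      have "{case_bool f g b -` A \<inter> space M |A. A \<in> sets (case_bool borel borel b)} \<subseteq>
            sets (coord_algebra (KK b))"
        using assms(2,3) by (cases b) (auto simp: KK_def measurable_def)
      also have "\<dots> = {(\<lambda>\<omega>. restrict \<omega> (KK b)) -` A | A. A \<in> sets (PiM (KK b) (\<lambda>_. \<mu>))}"
        unfolding sets_coord_algebra sPi ..
      finally show "sigma_sets (space M) {case_bool f g b -` A \<inter> space M |A. A \<in> sets (case_bool borel borel b)}
         \<subseteq> sigma_sets UNIV {(\<lambda>\<omega>. restrict \<omega> (KK b)) -` A | A. A \<in> sets (PiM (KK b) (\<lambda>_. \<mu>))}"
        by (simp add: sigma_sets_subseteq)
    qed
  qed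
qed

lemma indep_coord_algebra_mult:
  fixes f g :: "omega \<Rightarrow> real"
  assumes "J \<inter> K = {}" "f \<in> borel_measurable (coord_algebra J)" "g \<in> borel_measurable (coord_algebra K)"
    "integrable M f" "integrable M g"
  shows "integrable M (\<lambda>\<omega>. f \<omega> * g \<omega>)" "(\<integral>\<omega>. f \<omega> * g \<omega> \<partial>M) = (\<integral>\<omega>. f \<omega> \<partial>M) * (\<integral>\<omega>. g \<omega> \<partial>M)"
  using indep_var_integrable indep_var_lebesgue_integral indep_var_coord_algebra[OF assms(1-3)] assms(4,5)
  by blast+

lemma real_cond_exp_indep_mult_mean_zero:
  fixes u v :: "omega \<Rightarrow> real"
  assumes "J \<inter> K = {}" and u: "u \<in> borel_measurable (coord_algebra J)" and v: "v \<in> borel_measurable (coord_algebra K)"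
    and "integrable M u" "integrable M v" "(\<integral>\<omega>. v \<omega> \<partial>M) = 0"
  shows "AE \<omega> in M. real_cond_exp M (coord_algebra J) (\<lambda>\<omega>. u \<omega> * v \<omega>) \<omega> = 0"
proof -
  interpret sigma_finite_subalgebra M "coord_algebra J" by (rule sigma_finite_subalgebra_coord_algebra)
  show ?thesis
  proof (rule real_cond_exp_charact)
    fix A assume A: "A \<in> sets (coord_algebra J)"
    then have AM: "A \<in> sets M" using subalgebra_coord_algebra unfolding subalgebra_def by auto
    have "(\<lambda>\<omega>. indicator A \<omega> * u \<omega>) \<in> borel_measurable (coord_algebra J)" using A u by measurable
    moreover have "integrable M (\<lambda>\<omega>. indicator A \<omega> * u \<omega>)"
      using integrable_mult_indicator[OF AM assms(4)] by simp
    ultimately have "(\<integral>\<omega>. (indicator A \<omega> * u \<omega>) * v \<omega> \<partial>M) = 0"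
      using indep_coord_algebra_mult(2)[OF assms(1) _ v _ assms(5)] assms(6) by simp
    then show "(\<integral>\<omega>\<in>A. u \<omega> * v \<omega> \<partial>M) = (\<integral>\<omega>\<in>A. 0 \<partial>M)"
      by (simp add: set_lebesgue_integral_def mult.assoc)
  qed (use indep_coord_algebra_mult(1)[OF assms(1-5)] in auto)
qed

lemma measurable_resample[measurable]: "resample \<in> measurable M M"
proof -
  have "(\<lambda>\<omega> i. \<omega> (swap_idx i)) \<in> measurable (PiM UNIV (\<lambda>_::int option. borel)) (PiM UNIV (\<lambda>_. borel))"
    by (rule measurable_PiM_single') auto
  then show ?thesis unfolding measurable_cong_sets[OF sets_M sets_M] resample_def .
qed

lemma distr_resample: "distr M M resample = M"
proof -
  have "distr (PiM UNIV (\<lambda>_. \<mu>)) (PiM UNIV (\<lambda>i. \<mu>)) (\<lambda>\<omega>. \<lambda>n\<in>UNIV. \<omega> (swap_idx n)) = PiM UNIV (\<lambda>i. \<mu>)"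
    using distr_PiM_reindex[of UNIV "\<lambda>_. \<mu>" swap_idx UNIV] inj_swap_idx prob_mu by auto
  moreover have "(\<lambda>\<omega>. \<lambda>n\<in>UNIV. \<omega> (swap_idx n)) = resample" by (auto simp: resample_def fun_eq_iff)
  ultimately show ?thesis by (simp add: iid_space_def)
qed

lemma nn_integral_resample:
  assumes "f \<in> borel_measurable M" shows "(\<integral>\<^sup>+\<omega>. f (resample \<omega>) \<partial>M) = (\<integral>\<^sup>+\<omega>. f \<omega> \<partial>M)"
  using nn_integral_distr[OF measurable_resample, of f] assms by (simp add: distr_resample)

lemma integrable_resample:
  fixes f :: "omega \<Rightarrow> real"
  assumes "f \<in> borel_measurable M" shows "integrable M (\<lambda>\<omega>. f (resample \<omega>)) \<longleftrightarrow> integrable M f"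
  using integrable_distr_eq[OF measurable_resample, of f] assms by (simp add: distr_resample)

lemma AE_resample:
  assumes "AE \<omega> in M. P \<omega>" shows "AE \<omega> in M. P (resample \<omega>)"
proof -
  have "AE x in distr M M resample. P x" by (subst distr_resample) (rule assms)
  then show ?thesis by (rule AE_distrD[OF measurable_resample])
qed

lemma AE_diff_resample_of_Lp_limit:
  fixes Z D :: "omega \<Rightarrow> real" and S :: "nat \<Rightarrow> omega \<Rightarrow> real"
  assumes p: "p > 0" and meas: "Z \<in> borel_measurable M" "D \<in> borel_measurable M" "\<And>n. S n \<in> borel_measurable M"
    and lim: "(\<lambda>n. \<integral>\<^sup>+\<omega>. ennreal (\<bar>Z \<omega> - S n \<omega>\<bar> powr p) \<partial>M) \<longlonglongrightarrow> 0"
    and eq: "\<And>n \<omega>. n \<ge> N \<Longrightarrow> S n \<omega> - S n (resample \<omega>) = D \<omega>"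
  shows "AE \<omega> in M. Z \<omega> - Z (resample \<omega>) = D \<omega>"
proof -
  have Sr: "(\<lambda>\<omega>. S n (resample \<omega>)) \<in> borel_measurable M" for n using meas by measurable
  have "(\<integral>\<^sup>+\<omega>. ennreal (\<bar>Z (resample \<omega>) - S n (resample \<omega>)\<bar> powr p) \<partial>M)
      = (\<integral>\<^sup>+\<omega>. ennreal (\<bar>Z \<omega> - S n \<omega>\<bar> powr p) \<partial>M)" for n
    by (rule nn_integral_resample) (use meas in measurable)
  then have "(\<lambda>n. \<integral>\<^sup>+\<omega>. ennreal (\<bar>Z (resample \<omega>) - S n (resample \<omega>)\<bar> powr p) \<partial>M) \<longlonglongrightarrow> 0"
    using lim by simp
  moreover have "(\<lambda>\<omega>. Z (resample \<omega>)) \<in> borel_measurable M" using meas by measurable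
  ultimately show ?thesis
    using AE_diff_of_Lp_limits[OF p meas(1) _ meas(2,3) Sr lim _ eq] by blast
qed

end

section \<open>Innovations and Rosenthal's inequality\<close>

text \<open>\<open>innov i\<close> is the noise entering at time \<open>i\<close> into the difference of a solution and its
  resampled copy; at time \<open>0\<close> both \<open>\<zeta>\<^sub>0\<close> and \<open>\<zeta>\<^sub>0'\<close> enter.\<close>
definition innov :: "nat \<Rightarrow> omega \<Rightarrow> real" where
  "innov i \<omega> = (if i = 0 then \<omega> (Some 0) - \<omega> None else \<omega> (Some (int i)))"

definition innov_coords :: "nat \<Rightarrow> int option set" where
  "innov_coords i = (if i = 0 then {Some 0, None} else {Some (int i)})"

lemma measurable_innov_coord_algebra: "innov i \<in> borel_measurable (coord_algebra (innov_coords i))"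
  unfolding innov_def[abs_def] innov_coords_def by (cases "i = 0") auto

lemma innov_coords_subset_past_coords: "innov_coords i \<subseteq> past_coords (Suc i)"
  by (auto simp: innov_coords_def past_coords_def)

lemma past_coords_inter_innov_coords: "past_coords i \<inter> innov_coords i = {}"
  by (auto simp: innov_coords_def past_coords_def)

locale model = iid +
  fixes p a L K :: real and Q :: "real \<Rightarrow> real" and b :: "nat \<Rightarrow> real"
  assumes p1: "p \<ge> 1" and mom: "integrable \<mu> (\<lambda>x. \<bar>x\<bar> powr p)"
    and mean: "p > 1 \<longrightarrow> (\<integral>x. x \<partial>\<mu>) = 0"
    and L0: "L \<ge> 0" and Lip: "\<forall>x y. \<bar>Q x - Q y\<bar> \<le> L * \<bar>x - y\<bar>"
    and Ros: "rosenthal_const TYPE(omega) p K" and K0: "K \<ge> 0"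
begin

definition moment_p :: real where
  "moment_p = (\<integral>x. \<bar>x\<bar> powr p \<partial>\<mu>)"

lemma p_pos: "p > 0" using p1 by simp

lemma measurable_Q[measurable]: "Q \<in> borel_measurable borel"
proof (rule borel_measurable_continuous_onI, rule lipschitz_on_continuous_on)
  show "L-lipschitz_on UNIV Q"
    by (rule lipschitz_onI) (use Lip L0 in \<open>auto simp: dist_real_def\<close>)
qed

lemma moment_p_nonneg: "moment_p \<ge> 0" unfolding moment_p_def by simp

lemma integrable_powr_coord: "integrable M (\<lambda>\<omega>. \<bar>\<omega> i\<bar> powr p)"
  using integrable_coord_comp[of "\<lambda>x. \<bar>x\<bar> powr p" i] mom by simp

lemma integral_powr_coord: "(\<integral>\<omega>. \<bar>\<omega> i\<bar> powr p \<partial>M) = moment_p"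
  using integral_coord_comp[of "\<lambda>x. \<bar>x\<bar> powr p" i] by (simp add: moment_p_def)

lemma integrable_coord: "integrable M (\<lambda>\<omega>. \<omega> i)"
  by (rule integrable_of_integrable_powr[OF p1 _ integrable_powr_coord]) simp

lemma integral_coord_eq_0: "p > 1 \<Longrightarrow> (\<integral>\<omega>. \<omega> i \<partial>M) = 0"
  using integral_coord_comp[of "\<lambda>x. x" i] mean by simp

lemma measurable_innov[measurable]: "innov i \<in> borel_measurable M"
  unfolding innov_def[abs_def] by measurable

lemma integrable_powr_innov: "integrable M (\<lambda>\<omega>. \<bar>innov i \<omega>\<bar> powr p)"
  unfolding innov_def
  using integrable_powr_add[OF p_pos _ _ integrable_powr_coord integrable_powr_coord[of None, THEN integrable_powr_cmult[of _ _ _ "-1"]]]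
  by (cases "i = 0") (auto simp: integrable_powr_coord)

lemma integral_innov_eq_0: "p > 1 \<Longrightarrow> (\<integral>\<omega>. innov i \<omega> \<partial>M) = 0"
  unfolding innov_def using integrable_coord integral_coord_eq_0 by (cases "i = 0") auto

lemma integral_powr_innov: "i \<ge> 1 \<Longrightarrow> (\<integral>\<omega>. \<bar>innov i \<omega>\<bar> powr p \<partial>M) = moment_p"
  by (simp add: innov_def integral_powr_coord)

lemma Q_diff_powr_le: "\<bar>Q (a + x) - Q (a + y)\<bar> powr p \<le> L powr p * \<bar>x - y\<bar> powr p"
proof -
  have "\<bar>Q (a + x) - Q (a + y)\<bar> powr p \<le> (L * \<bar>x - y\<bar>) powr p"
    using Lip[rule_format, of "a + x" "a + y"] p_pos by (intro powr_mono2) auto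
  also have "\<dots> = L powr p * \<bar>x - y\<bar> powr p" using L0 by (simp add: powr_mult)
  finally show ?thesis .
qed

lemma integrable_powr_Q:
  fixes f :: "omega \<Rightarrow> real"
  assumes "f \<in> borel_measurable M" "integrable M (\<lambda>\<omega>. \<bar>f \<omega>\<bar> powr p)"
  shows "integrable M (\<lambda>\<omega>. \<bar>Q (a + f \<omega>)\<bar> powr p)"
proof (rule Bochner_Integration.integrable_bound)
  show "integrable M (\<lambda>\<omega>. 2 powr p * (\<bar>Q a\<bar> powr p + L powr p * \<bar>f \<omega>\<bar> powr p))"
    using assms(2) by auto
  show "AE \<omega> in M. norm (\<bar>Q (a + f \<omega>)\<bar> powr p) \<le> norm (2 powr p * (\<bar>Q a\<bar> powr p + L powr p * \<bar>f \<omega>\<bar> powr p))"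
  proof (intro AE_I2)
    fix \<omega>
    have "\<bar>Q (a + f \<omega>)\<bar> powr p \<le> 2 powr p * (\<bar>Q a\<bar> powr p + \<bar>Q (a + f \<omega>) - Q (a + 0)\<bar> powr p)"
      using powr_abs_add_le[OF p_pos, of "Q a" "Q (a + f \<omega>) - Q (a + 0)"] by simp
    also have "\<dots> \<le> 2 powr p * (\<bar>Q a\<bar> powr p + L powr p * \<bar>f \<omega>\<bar> powr p)"
      using Q_diff_powr_le[of "f \<omega>" 0] by (intro mult_left_mono add_left_mono) auto
    finally show "norm (\<bar>Q (a + f \<omega>)\<bar> powr p) \<le> norm (2 powr p * (\<bar>Q a\<bar> powr p + L powr p * \<bar>f \<omega>\<bar> powr p))"
      by simp
  qed
qed (use assms in auto)

lemma integrable_powr_Q_diff: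
  fixes f g :: "omega \<Rightarrow> real"
  assumes "f \<in> borel_measurable M" "g \<in> borel_measurable M" "integrable M (\<lambda>\<omega>. \<bar>f \<omega> - g \<omega>\<bar> powr p)"
  shows "integrable M (\<lambda>\<omega>. \<bar>Q (a + f \<omega>) - Q (a + g \<omega>)\<bar> powr p)"
proof (rule Bochner_Integration.integrable_bound)
  show "integrable M (\<lambda>\<omega>. L powr p * \<bar>f \<omega> - g \<omega>\<bar> powr p)" using assms(3) by auto
  show "AE \<omega> in M. norm (\<bar>Q (a + f \<omega>) - Q (a + g \<omega>)\<bar> powr p) \<le> norm (L powr p * \<bar>f \<omega> - g \<omega>\<bar> powr p)"
    using Q_diff_powr_le by auto
qed (use assms in auto)

lemma integral_powr_Q_diff_le:
  fixes f g :: "omega \<Rightarrow> real"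
  assumes "f \<in> borel_measurable M" "g \<in> borel_measurable M" "integrable M (\<lambda>\<omega>. \<bar>f \<omega> - g \<omega>\<bar> powr p)"
  shows "(\<integral>\<omega>. \<bar>Q (a + f \<omega>) - Q (a + g \<omega>)\<bar> powr p \<partial>M) \<le> L powr p * (\<integral>\<omega>. \<bar>f \<omega> - g \<omega>\<bar> powr p \<partial>M)"
proof -
  have "(\<integral>\<omega>. \<bar>Q (a + f \<omega>) - Q (a + g \<omega>)\<bar> powr p \<partial>M) \<le> (\<integral>\<omega>. L powr p * \<bar>f \<omega> - g \<omega>\<bar> powr p \<partial>M)"
    by (rule integral_mono[OF integrable_powr_Q_diff[OF assms]]) (use assms Q_diff_powr_le in auto)
  then show ?thesis by simp
qed

lemma integral_powr_mult_innov:
  fixes U :: "omega \<Rightarrow> real"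
  assumes "U \<in> borel_measurable (coord_algebra (past_coords i))" "integrable M (\<lambda>\<omega>. \<bar>U \<omega>\<bar> powr p)"
  shows "integrable M (\<lambda>\<omega>. \<bar>U \<omega> * innov i \<omega>\<bar> powr p)"
    and "(\<integral>\<omega>. \<bar>U \<omega> * innov i \<omega>\<bar> powr p \<partial>M) = (\<integral>\<omega>. \<bar>U \<omega>\<bar> powr p \<partial>M) * (\<integral>\<omega>. \<bar>innov i \<omega>\<bar> powr p \<partial>M)"
proof -
  have "(\<lambda>\<omega>. \<bar>U \<omega>\<bar> powr p) \<in> borel_measurable (coord_algebra (past_coords i))"
    using assms(1) by measurable
  moreover have "(\<lambda>\<omega>. \<bar>innov i \<omega>\<bar> powr p) \<in> borel_measurable (coord_algebra (innov_coords i))"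
    using measurable_innov_coord_algebra by measurable
  ultimately have *: "integrable M (\<lambda>\<omega>. \<bar>U \<omega>\<bar> powr p * \<bar>innov i \<omega>\<bar> powr p)"
    "(\<integral>\<omega>. \<bar>U \<omega>\<bar> powr p * \<bar>innov i \<omega>\<bar> powr p \<partial>M) = (\<integral>\<omega>. \<bar>U \<omega>\<bar> powr p \<partial>M) * (\<integral>\<omega>. \<bar>innov i \<omega>\<bar> powr p \<partial>M)"
    using indep_coord_algebra_mult[OF past_coords_inter_innov_coords _ _ assms(2) integrable_powr_innov] by auto
  show "integrable M (\<lambda>\<omega>. \<bar>U \<omega> * innov i \<omega>\<bar> powr p)"
    using *(1) by (simp add: abs_mult powr_mult)
  show "(\<integral>\<omega>. \<bar>U \<omega> * innov i \<omega>\<bar> powr p \<partial>M) = (\<integral>\<omega>. \<bar>U \<omega>\<bar> powr p \<partial>M) * (\<integral>\<omega>. \<bar>innov i \<omega>\<bar> powr p \<partial>M)"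
    using *(2) by (simp add: abs_mult powr_mult)
qed

lemma integrable_powr_resample:
  fixes f :: "omega \<Rightarrow> real"
  assumes "f \<in> borel_measurable M" "integrable M (\<lambda>\<omega>. \<bar>f \<omega>\<bar> powr p)"
  shows "integrable M (\<lambda>\<omega>. \<bar>f (resample \<omega>)\<bar> powr p)"
  using integrable_resample[of "\<lambda>\<omega>. \<bar>f \<omega>\<bar> powr p"] assms by simp

lemma integrable_powr_diff_resample:
  fixes f :: "omega \<Rightarrow> real"
  assumes f: "f \<in> borel_measurable M" "integrable M (\<lambda>\<omega>. \<bar>f \<omega>\<bar> powr p)"
  shows "integrable M (\<lambda>\<omega>. \<bar>f \<omega> - f (resample \<omega>)\<bar> powr p)"
proof -
  have m: "(\<lambda>\<omega>. - f (resample \<omega>)) \<in> borel_measurable M" using f by measurable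
  have "integrable M (\<lambda>\<omega>. \<bar>- f (resample \<omega>)\<bar> powr p)" using integrable_powr_resample[OF f] by simp
  from integrable_powr_add[OF p_pos f(1) m f(2) this] show ?thesis by simp
qed

text \<open>The summands \<open>U\<^sub>i innov\<^sub>i\<close> are martingale differences for the filtration generated by
  \<open>past_coords\<close>, since \<open>innov\<^sub>i\<close> is centred and independent of the past.\<close>
lemma moment_sum_mult_innov_le:
  fixes U :: "nat \<Rightarrow> omega \<Rightarrow> real"
  assumes U: "\<And>i. U i \<in> borel_measurable (coord_algebra (past_coords i))"
    and Up: "\<And>i. integrable M (\<lambda>\<omega>. \<bar>U i \<omega>\<bar> powr p)"
  shows "(\<integral>\<omega>. \<bar>\<Sum>i<n. U i \<omega> * innov i \<omega>\<bar> powr p \<partial>M)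
    \<le> rosenthal_bound p K n (\<lambda>i. \<integral>\<omega>. \<bar>U i \<omega> * innov i \<omega>\<bar> powr p \<partial>M)"
proof (rule rosenthal_constD[OF Ros prob_space_M])
  let ?Y = "\<lambda>i \<omega>. U i \<omega> * innov i \<omega>"
  have Um: "U i \<in> borel_measurable M" for i using U measurable_coord_algebraD by blast
  show Yp: "integrable M (\<lambda>\<omega>. \<bar>?Y i \<omega>\<bar> powr p)" for i by (rule integral_powr_mult_innov(1)[OF U Up])
  show YM: "?Y i \<in> borel_measurable M" for i using Um by measurable
  assume "p > 1"
  show "is_mds M ?Y"
    unfolding is_mds_def
  proof (intro exI[of _ "\<lambda>j. coord_algebra (past_coords j)"] conjI allI impI)
    show "sigma_finite_subalgebra M (coord_algebra (past_coords j))" for j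
      by (rule sigma_finite_subalgebra_coord_algebra)
    show "sets (coord_algebra (past_coords i)) \<subseteq> sets (coord_algebra (past_coords j))" if "i \<le> j" for i j
      by (rule sets_coord_algebra_mono[OF past_coords_mono[OF that]])
    show "?Y j \<in> borel_measurable (coord_algebra (past_coords (Suc j)))" for j
      using measurable_coord_algebra_mono[OF past_coords_mono U, of j "Suc j"]
        measurable_coord_algebra_mono[OF innov_coords_subset_past_coords measurable_innov_coord_algebra]
      by measurable
    show "integrable M (?Y j)" for j by (rule integrable_of_integrable_powr[OF p1 YM Yp])
    show "AE \<omega> in M. real_cond_exp M (coord_algebra (past_coords j)) (?Y j) \<omega> = 0" for j
      using \<open>p > 1\<close> integrable_of_integrable_powr[OF p1 Um Up] integrable_of_integrable_powr[OF p1 _ integrable_powr_innov]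
      by (intro real_cond_exp_indep_mult_mean_zero[OF past_coords_inter_innov_coords U measurable_innov_coord_algebra])
        (auto simp: integral_innov_eq_0)
  qed
qed

end

section \<open>Moment recursions for the two solutions\<close>

locale X_solution = model +
  fixes g :: "(nat \<Rightarrow> real) \<Rightarrow> real"
  assumes measurable_g: "g \<in> borel_measurable (PiM UNIV (\<lambda>_::nat. borel))"
    and Xsol_g: "Xsol M p a b Q (\<lambda>t \<omega>. g (past \<omega> (t - 1)))"
begin

definition X :: "int \<Rightarrow> omega \<Rightarrow> real" where
  "X t \<omega> = g (past \<omega> (t - 1))"

lemma measurable_X[measurable]: "X t \<in> borel_measurable M"
  and integrable_powr_X: "integrable M (\<lambda>\<omega>. \<bar>X t \<omega>\<bar> powr p)"
  and X_Lp_series: "(\<lambda>n. \<integral>\<^sup>+\<omega>. ennreal (\<bar>X t \<omega> -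
       (\<Sum>j\<in>{1..n}. b j * \<omega> (Some (t - int j)) * Q (a + X (t - int j) \<omega>))\<bar> powr p) \<partial>M) \<longlonglongrightarrow> 0"
  using Xsol_g unfolding Xsol_def X_def[abs_def] by auto

lemma X_resample_nonpos: "t \<le> 0 \<Longrightarrow> X t (resample \<omega>) = X t \<omega>"
  using past_resample_neg[of "t - 1" \<omega>] by (simp add: X_def)

lemma measurable_X_coord_algebra: "X (int i) \<in> borel_measurable (coord_algebra (past_coords i))"
  unfolding X_def[abs_def] by (rule measurable_past_coord_algebra[OF _ measurable_g]) (auto simp: past_coords_def)

lemma measurable_X_resample_coord_algebra:
  "i \<ge> 1 \<Longrightarrow> (\<lambda>\<omega>. X (int i) (resample \<omega>)) \<in> borel_measurable (coord_algebra (past_coords i))"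
  unfolding X_def by (rule measurable_past_resample_coord_algebra[OF _ measurable_g])
    (auto intro!: swap_idx_Some_in_past_coords)

lemma integrable_powr_X_diff: "integrable M (\<lambda>\<omega>. \<bar>X t \<omega> - X t (resample \<omega>)\<bar> powr p)"
  by (rule integrable_powr_diff_resample[OF measurable_X integrable_powr_X])

definition X_coeff :: "nat \<Rightarrow> nat \<Rightarrow> omega \<Rightarrow> real" where
  "X_coeff k i \<omega> = b (k - i) *
     (if i = 0 then Q (a + X 0 \<omega>) else Q (a + X (int i) \<omega>) - Q (a + X (int i) (resample \<omega>)))"

lemma X_resample_diff:
  "AE \<omega> in M. X (int k) \<omega> - X (int k) (resample \<omega>) = (\<Sum>i<k. X_coeff k i \<omega> * innov i \<omega>)"
proof (rule AE_diff_resample_of_Lp_limit[OF p_pos measurable_X _ _ X_Lp_series])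
  let ?tm = "\<lambda>j \<omega>. b j * \<omega> (Some (int k - int j)) * Q (a + X (int k - int j) \<omega>)"
  show "(\<lambda>\<omega>. \<Sum>i<k. X_coeff k i \<omega> * innov i \<omega>) \<in> borel_measurable M"
    unfolding X_coeff_def by measurable
  show "(\<lambda>\<omega>. \<Sum>j\<in>{1..n}. ?tm j \<omega>) \<in> borel_measurable M" for n by measurable
  fix n \<omega> assume "n \<ge> k"
  have "(\<Sum>j\<in>{1..n}. ?tm j \<omega>) - (\<Sum>j\<in>{1..n}. ?tm j (resample \<omega>)) = (\<Sum>j\<in>{1..k}. ?tm j \<omega> - ?tm j (resample \<omega>))"
    unfolding sum_subtractf[symmetric]
    by (rule sum.mono_neutral_right) (use \<open>n \<ge> k\<close> X_resample_nonpos in auto)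
  also have "\<dots> = (\<Sum>i<k. ?tm (k - i) \<omega> - ?tm (k - i) (resample \<omega>))"
    by (rule sum.reindex_bij_witness[where i="\<lambda>i. k - i" and j="\<lambda>j. k - j"]) auto
  also have "\<dots> = (\<Sum>i<k. X_coeff k i \<omega> * innov i \<omega>)"
  proof (rule sum.cong[OF refl])
    fix i assume "i \<in> {..<k}"
    then show "?tm (k - i) \<omega> - ?tm (k - i) (resample \<omega>) = X_coeff k i \<omega> * innov i \<omega>"
      by (cases "i = 0") (simp_all add: X_coeff_def innov_def of_nat_diff X_resample_nonpos algebra_simps)
  qed
  finally show "(\<Sum>j\<in>{1..n}. ?tm j \<omega>) - (\<Sum>j\<in>{1..n}. ?tm j (resample \<omega>)) = (\<Sum>i<k. X_coeff k i \<omega> * innov i \<omega>)" .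
qed

lemma measurable_X_coeff: "X_coeff k i \<in> borel_measurable (coord_algebra (past_coords i))"
  using measurable_X_coord_algebra[of 0] measurable_X_coord_algebra[of i] measurable_X_resample_coord_algebra[of i]
  unfolding X_coeff_def by (cases "i = 0") simp_all

lemma integrable_powr_X_coeff: "integrable M (\<lambda>\<omega>. \<bar>X_coeff k i \<omega>\<bar> powr p)"
proof (cases "i = 0")
  case True
  then show ?thesis unfolding X_coeff_def
    using integrable_powr_cmult[OF integrable_powr_Q[OF measurable_X integrable_powr_X[of 0]], where c="b k"] by simp
next
  case False
  have "(\<lambda>\<omega>. X i (resample \<omega>)) \<in> borel_measurable M" by measurable
  from integrable_powr_Q_diff[OF measurable_X this integrable_powr_X_diff]
  show ?thesis unfolding X_coeff_def using False integrable_powr_cmult[where c="b (k - i)"] by simp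
qed

definition X_moment :: "nat \<Rightarrow> real" where
  "X_moment k = (\<integral>\<omega>. \<bar>X (int k) \<omega> - X (int k) (resample \<omega>)\<bar> powr p \<partial>M)"

lemma X_moment_nonneg: "X_moment k \<ge> 0"
  by (simp add: X_moment_def)

lemma moment_X_coeff_innov_le:
  assumes "i \<ge> 1"
  shows "(\<integral>\<omega>. \<bar>X_coeff k i \<omega> * innov i \<omega>\<bar> powr p \<partial>M)
    \<le> \<bar>b (k - i)\<bar> powr p * (moment_p * L powr p * X_moment i)"
proof -
  have "(\<integral>\<omega>. \<bar>X_coeff k i \<omega>\<bar> powr p \<partial>M)
      = \<bar>b (k - i)\<bar> powr p * (\<integral>\<omega>. \<bar>Q (a + X i \<omega>) - Q (a + X i (resample \<omega>))\<bar> powr p \<partial>M)"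
    using assms by (simp add: X_coeff_def abs_mult powr_mult)
  also have "\<dots> \<le> \<bar>b (k - i)\<bar> powr p * (L powr p * (\<integral>\<omega>. \<bar>X i \<omega> - X i (resample \<omega>)\<bar> powr p \<partial>M))"
    by (intro mult_left_mono integral_powr_Q_diff_le integrable_powr_X_diff) simp_all
  finally have *: "(\<integral>\<omega>. \<bar>X_coeff k i \<omega>\<bar> powr p \<partial>M)
      \<le> \<bar>b (k - i)\<bar> powr p * (L powr p * (\<integral>\<omega>. \<bar>X i \<omega> - X i (resample \<omega>)\<bar> powr p \<partial>M))" .
  have "(\<integral>\<omega>. \<bar>X_coeff k i \<omega> * innov i \<omega>\<bar> powr p \<partial>M) = (\<integral>\<omega>. \<bar>X_coeff k i \<omega>\<bar> powr p \<partial>M) * moment_p"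
    using integral_powr_mult_innov(2)[OF measurable_X_coeff integrable_powr_X_coeff] integral_powr_innov[OF assms]
    by simp
  also have "\<dots> \<le> \<bar>b (k - i)\<bar> powr p * (L powr p * (\<integral>\<omega>. \<bar>X i \<omega> - X i (resample \<omega>)\<bar> powr p \<partial>M)) * moment_p"
    using * moment_p_nonneg by (rule mult_right_mono)
  finally show ?thesis by (simp add: X_moment_def mult_ac)
qed

lemma moment_X_coeff_innov_0:
  "(\<integral>\<omega>. \<bar>X_coeff k 0 \<omega> * innov 0 \<omega>\<bar> powr p \<partial>M)
    = \<bar>b k\<bar> powr p * ((\<integral>\<omega>. \<bar>Q (a + X 0 \<omega>)\<bar> powr p \<partial>M) * (\<integral>\<omega>. \<bar>innov 0 \<omega>\<bar> powr p \<partial>M))"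
  using integral_powr_mult_innov(2)[OF measurable_X_coeff integrable_powr_X_coeff, of k 0]
  by (simp add: X_coeff_def abs_mult powr_mult)

lemma X_rosenthal_recursion: "\<exists>C0\<ge>0. rosenthal_recursion p K b C0 (moment_p * L powr p) X_moment"
proof (intro exI conjI)
  define C0 where "C0 = (\<integral>\<omega>. \<bar>Q (a + X 0 \<omega>)\<bar> powr p \<partial>M) * (\<integral>\<omega>. \<bar>innov 0 \<omega>\<bar> powr p \<partial>M)"
  show "C0 \<ge> 0" unfolding C0_def by simp
  show "rosenthal_recursion p K b C0 (moment_p * L powr p) X_moment"
    unfolding rosenthal_recursion_def
  proof (intro allI impI)
    fix k :: nat assume "k \<ge> 1"
    have "AE \<omega> in M. \<bar>X k \<omega> - X k (resample \<omega>)\<bar> powr p = \<bar>\<Sum>i<k. X_coeff k i \<omega> * innov i \<omega>\<bar> powr p"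
      using X_resample_diff[of k] by eventually_elim simp
    then have "X_moment k = (\<integral>\<omega>. \<bar>\<Sum>i<k. X_coeff k i \<omega> * innov i \<omega>\<bar> powr p \<partial>M)"
      unfolding X_moment_def by (intro integral_cong_AE) (simp, unfold X_coeff_def, measurable)
    also have "\<dots> \<le> rosenthal_bound p K k (\<lambda>i. \<integral>\<omega>. \<bar>X_coeff k i \<omega> * innov i \<omega>\<bar> powr p \<partial>M)"
      by (rule moment_sum_mult_innov_le[OF measurable_X_coeff integrable_powr_X_coeff])
    also have "\<dots> \<le> rosenthal_bound p K k (\<lambda>i. \<bar>b (k - i)\<bar> powr p * (if i = 0 then C0 else moment_p * L powr p * X_moment i))"
    proof (rule rosenthal_bound_mono[OF K0])
      fix i
      show "0 \<le> (\<integral>\<omega>. \<bar>X_coeff k i \<omega> * innov i \<omega>\<bar> powr p \<partial>M)" by simp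
      show "(\<integral>\<omega>. \<bar>X_coeff k i \<omega> * innov i \<omega>\<bar> powr p \<partial>M)
          \<le> \<bar>b (k - i)\<bar> powr p * (if i = 0 then C0 else moment_p * L powr p * X_moment i)"
        using moment_X_coeff_innov_le[of i k] by (cases "i = 0") (simp_all add: moment_X_coeff_innov_0 C0_def)
    qed
    finally show "X_moment k \<le> rosenthal_bound p K k (\<lambda>i. \<bar>b (k - i)\<bar> powr p * (if i = 0 then C0 else moment_p * L powr p * X_moment i))" .
  qed
qed

lemma deltap_X: "deltap M p g (int k - 1) = X_moment k powr (1 / p)"
  by (simp add: deltap_def X_moment_def X_def past'_eq_past_resample)

end

locale r_solution = model +
  fixes h :: "(nat \<Rightarrow> real) \<Rightarrow> real"
  assumes measurable_h: "h \<in> borel_measurable (PiM UNIV (\<lambda>_::nat. borel))"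
    and rsol_h: "rsol M p a b Q (\<lambda>t \<omega>. h (past \<omega> t))"
begin

definition r :: "int \<Rightarrow> omega \<Rightarrow> real" where
  "r t \<omega> = h (past \<omega> t)"

lemma measurable_r[measurable]: "r t \<in> borel_measurable M"
  and integrable_powr_r: "integrable M (\<lambda>\<omega>. \<bar>r t \<omega>\<bar> powr p)"
  using rsol_h unfolding rsol_def r_def[abs_def] by auto

text \<open>The argument of \<open>Q\<close> in the equation for \<open>r t\<close>, i.e. the \<open>L\<^sup>p\<close>-sum of \<open>b (t - s) * r s\<close>
  over \<open>s < t\<close>, as supplied by the definition of an \<open>L\<^sup>p\<close>-solution.\<close>
definition r_input :: "int \<Rightarrow> omega \<Rightarrow> real" where
  "r_input t = (SOME Y. Y \<in> borel_measurable M
     \<and> (\<lambda>n. \<integral>\<^sup>+\<omega>. ennreal (\<bar>Y \<omega> - (\<Sum>j\<in>{1..n}. b j * r (t - int j) \<omega>)\<bar> powr p) \<partial>M) \<longlonglongrightarrow> 0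
     \<and> (AE \<omega> in M. r t \<omega> = \<omega> (Some t) * Q (a + Y \<omega>)))"

lemma measurable_r_input[measurable]: "r_input t \<in> borel_measurable M"
  and r_input_Lp_series:
    "(\<lambda>n. \<integral>\<^sup>+\<omega>. ennreal (\<bar>r_input t \<omega> - (\<Sum>j\<in>{1..n}. b j * r (t - int j) \<omega>)\<bar> powr p) \<partial>M) \<longlonglongrightarrow> 0"
  and r_eq_input: "AE \<omega> in M. r t \<omega> = \<omega> (Some t) * Q (a + r_input t \<omega>)"
proof -
  have "\<exists>Y. Y \<in> borel_measurable M
     \<and> (\<lambda>n. \<integral>\<^sup>+\<omega>. ennreal (\<bar>Y \<omega> - (\<Sum>j\<in>{1..n}. b j * r (t - int j) \<omega>)\<bar> powr p) \<partial>M) \<longlonglongrightarrow> 0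
     \<and> (AE \<omega> in M. r t \<omega> = \<omega> (Some t) * Q (a + Y \<omega>))"
    using rsol_h unfolding rsol_def r_def[symmetric] by blast
  from someI_ex[OF this] show "r_input t \<in> borel_measurable M"
    "(\<lambda>n. \<integral>\<^sup>+\<omega>. ennreal (\<bar>r_input t \<omega> - (\<Sum>j\<in>{1..n}. b j * r (t - int j) \<omega>)\<bar> powr p) \<partial>M) \<longlonglongrightarrow> 0"
    "AE \<omega> in M. r t \<omega> = \<omega> (Some t) * Q (a + r_input t \<omega>)"
    unfolding r_input_def by blast+
qed

lemma r_resample_neg: "t < 0 \<Longrightarrow> r t (resample \<omega>) = r t \<omega>"
  using past_resample_neg by (simp add: r_def)

lemma measurable_r_coord_algebra: "t < int i \<Longrightarrow> r t \<in> borel_measurable (coord_algebra (past_coords i))"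
  unfolding r_def[abs_def] by (rule measurable_past_coord_algebra[OF _ measurable_h]) (auto simp: past_coords_def)

lemma measurable_r_resample_coord_algebra:
  "t < int i \<Longrightarrow> i \<ge> 1 \<Longrightarrow> (\<lambda>\<omega>. r t (resample \<omega>)) \<in> borel_measurable (coord_algebra (past_coords i))"
  unfolding r_def by (rule measurable_past_resample_coord_algebra[OF _ measurable_h])
    (auto intro!: swap_idx_Some_in_past_coords)

lemma integrable_powr_r_partial: "integrable M (\<lambda>\<omega>. \<bar>\<Sum>j\<in>{1..n}. b j * r (t - int j) \<omega>\<bar> powr p)"
  by (rule integrable_powr_sum[OF p_pos]) (use integrable_powr_cmult[OF integrable_powr_r] in auto)

lemma integrable_powr_r_input: "integrable M (\<lambda>\<omega>. \<bar>r_input t \<omega>\<bar> powr p)"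
  by (rule integrable_powr_of_Lp_limit[OF p1 measurable_r_input _ integrable_powr_r_partial r_input_Lp_series])
    measurable

lemma r_input_AE_eq_measurable:
  "\<exists>Z\<in>borel_measurable (coord_algebra (past_coords i)). AE \<omega> in M. r_input (int i) \<omega> = Z \<omega>"
proof (rule Lp_limit_AE_eq_measurable[OF sigma_finite_subalgebra_coord_algebra p1 measurable_r_input _
      integrable_powr_r_partial r_input_Lp_series])
  show "(\<lambda>\<omega>. \<Sum>j\<in>{1..n}. b j * r (int i - int j) \<omega>) \<in> borel_measurable (coord_algebra (past_coords i))" for n
    by (intro borel_measurable_sum borel_measurable_times borel_measurable_const measurable_r_coord_algebra) auto
qed

lemma r_input_resample_AE_eq_measurable:
  assumes "i \<ge> 1"
  shows "\<exists>Z\<in>borel_measurable (coord_algebra (past_coords i)). AE \<omega> in M. r_input (int i) (resample \<omega>) = Z \<omega>"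
proof (rule Lp_limit_AE_eq_measurable[OF sigma_finite_subalgebra_coord_algebra p1])
  let ?S = "\<lambda>n \<omega>. \<Sum>j\<in>{1..n}. b j * r (int i - int j) (resample \<omega>)"
  show "(\<lambda>\<omega>. r_input (int i) (resample \<omega>)) \<in> borel_measurable M" by measurable
  show "?S n \<in> borel_measurable (coord_algebra (past_coords i))" for n
    using assms by (intro borel_measurable_sum borel_measurable_times borel_measurable_const measurable_r_resample_coord_algebra) auto
  show "integrable M (\<lambda>\<omega>. \<bar>?S n \<omega>\<bar> powr p)" for n
    by (rule integrable_powr_resample[where f="\<lambda>\<omega>. \<Sum>j\<in>{1..n}. b j * r (int i - int j) \<omega>", OF _ integrable_powr_r_partial]) measurable
  have "(\<integral>\<^sup>+\<omega>. ennreal (\<bar>r_input i (resample \<omega>) - ?S n \<omega>\<bar> powr p) \<partial>M)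
      = (\<integral>\<^sup>+\<omega>. ennreal (\<bar>r_input i \<omega> - (\<Sum>j\<in>{1..n}. b j * r (int i - int j) \<omega>)\<bar> powr p) \<partial>M)" for n
    by (rule nn_integral_resample[where f="\<lambda>\<omega>. ennreal (\<bar>r_input i \<omega> - (\<Sum>j\<in>{1..n}. b j * r (int i - int j) \<omega>)\<bar> powr p)"]) measurable
  then show "(\<lambda>n. \<integral>\<^sup>+\<omega>. ennreal (\<bar>r_input i (resample \<omega>) - ?S n \<omega>\<bar> powr p) \<partial>M) \<longlonglongrightarrow> 0"
    using r_input_Lp_series[of i] by simp
qed

lemma r_input_resample_diff:
  "AE \<omega> in M. r_input (int k) \<omega> - r_input (int k) (resample \<omega>)
     = (\<Sum>i<k. b (k - i) * (r i \<omega> - r i (resample \<omega>)))"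
proof (rule AE_diff_resample_of_Lp_limit[OF p_pos measurable_r_input _ _ r_input_Lp_series])
  let ?tm = "\<lambda>j \<omega>. b j * r (int k - int j) \<omega>"
  show "(\<lambda>\<omega>. \<Sum>i<k. b (k - i) * (r i \<omega> - r i (resample \<omega>))) \<in> borel_measurable M" by measurable
  show "(\<lambda>\<omega>. \<Sum>j\<in>{1..n}. ?tm j \<omega>) \<in> borel_measurable M" for n by measurable
  fix n \<omega> assume "n \<ge> k"
  have "(\<Sum>j\<in>{1..n}. ?tm j \<omega>) - (\<Sum>j\<in>{1..n}. ?tm j (resample \<omega>)) = (\<Sum>j\<in>{1..k}. ?tm j \<omega> - ?tm j (resample \<omega>))"
    unfolding sum_subtractf[symmetric]
    by (rule sum.mono_neutral_right) (use \<open>n \<ge> k\<close> r_resample_neg in auto)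
  also have "\<dots> = (\<Sum>i<k. b (k - i) * (r i \<omega> - r i (resample \<omega>)))"
    by (rule sum.reindex_bij_witness[where i="\<lambda>i. k - i" and j="\<lambda>j. k - j"]) (auto simp: of_nat_diff algebra_simps)
  finally show "(\<Sum>j\<in>{1..n}. ?tm j \<omega>) - (\<Sum>j\<in>{1..n}. ?tm j (resample \<omega>)) = (\<Sum>i<k. b (k - i) * (r i \<omega> - r i (resample \<omega>)))" .
qed

lemma r_resample_diff_factor_0:
  "\<exists>U\<in>borel_measurable (coord_algebra (past_coords 0)). integrable M (\<lambda>\<omega>. \<bar>U \<omega>\<bar> powr p)
     \<and> (AE \<omega> in M. r 0 \<omega> - r 0 (resample \<omega>) = U \<omega> * innov 0 \<omega>)"
proof -
  obtain Z where Z: "Z \<in> borel_measurable (coord_algebra (past_coords 0))" "AE \<omega> in M. r_input 0 \<omega> = Z \<omega>"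
    using r_input_AE_eq_measurable[of 0] by auto
  have ZM: "Z \<in> borel_measurable M" using Z(1) measurable_coord_algebraD by blast
  have "integrable M (\<lambda>\<omega>. \<bar>Z \<omega>\<bar> powr p)"
    using integrable_powr_r_input[of 0] Z(2) ZM by (subst integrable_cong_AE[symmetric]) auto
  moreover have "AE \<omega> in M. r 0 \<omega> - r 0 (resample \<omega>) = Q (a + Z \<omega>) * innov 0 \<omega>"
  proof -
    have "AE \<omega> in M. r 0 (resample \<omega>) = \<omega> None * Q (a + r_input 0 (resample \<omega>))"
      using AE_resample[OF r_eq_input[of 0]] by simp
    moreover have "AE \<omega> in M. r_input 0 \<omega> - r_input 0 (resample \<omega>) = 0"
      using r_input_resample_diff[of 0] by simp
    ultimately show ?thesis using r_eq_input[of 0] Z(2)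
      by eventually_elim (simp add: innov_def algebra_simps)
  qed
  ultimately show ?thesis using Z(1) ZM integrable_powr_Q[OF ZM]
    by (intro bexI[of _ "\<lambda>\<omega>. Q (a + Z \<omega>)"]) auto
qed

definition r_input_moment :: "nat \<Rightarrow> real" where
  "r_input_moment k = (\<integral>\<omega>. \<bar>r_input (int k) \<omega> - r_input (int k) (resample \<omega>)\<bar> powr p \<partial>M)"

lemma r_resample_diff_factor_pos:
  assumes "i \<ge> 1"
  shows "\<exists>U\<in>borel_measurable (coord_algebra (past_coords i)). integrable M (\<lambda>\<omega>. \<bar>U \<omega>\<bar> powr p)
     \<and> (AE \<omega> in M. r i \<omega> - r i (resample \<omega>) = U \<omega> * innov i \<omega>)
     \<and> (\<integral>\<omega>. \<bar>U \<omega>\<bar> powr p \<partial>M) \<le> L powr p * r_input_moment i"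
proof -
  obtain Z where Z: "Z \<in> borel_measurable (coord_algebra (past_coords i))" "AE \<omega> in M. r_input i \<omega> = Z \<omega>"
    using r_input_AE_eq_measurable[of i] by auto
  obtain Z' where Z': "Z' \<in> borel_measurable (coord_algebra (past_coords i))"
    "AE \<omega> in M. r_input i (resample \<omega>) = Z' \<omega>"
    using r_input_resample_AE_eq_measurable[OF assms] by auto
  have ZM: "Z \<in> borel_measurable M" "Z' \<in> borel_measurable M"
    using Z(1) Z'(1) measurable_coord_algebraD by blast+
  let ?U = "\<lambda>\<omega>. Q (a + Z \<omega>) - Q (a + Z' \<omega>)"
  have AEZ: "AE \<omega> in M. \<bar>Z \<omega> - Z' \<omega>\<bar> powr p = \<bar>r_input i \<omega> - r_input i (resample \<omega>)\<bar> powr p"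
    using Z(2) Z'(2) by eventually_elim simp
  have m: "(\<lambda>\<omega>. \<bar>Z \<omega> - Z' \<omega>\<bar> powr p) \<in> borel_measurable M"
    "(\<lambda>\<omega>. \<bar>r_input i \<omega> - r_input i (resample \<omega>)\<bar> powr p) \<in> borel_measurable M"
    using ZM by measurable
  have ZZ: "integrable M (\<lambda>\<omega>. \<bar>Z \<omega> - Z' \<omega>\<bar> powr p)"
      "(\<integral>\<omega>. \<bar>Z \<omega> - Z' \<omega>\<bar> powr p \<partial>M) = (\<integral>\<omega>. \<bar>r_input i \<omega> - r_input i (resample \<omega>)\<bar> powr p \<partial>M)"
    using integrable_powr_diff_resample[OF measurable_r_input integrable_powr_r_input, of i]
      integrable_cong_AE[OF m AEZ] integral_cong_AE[OF m AEZ] by simp_all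
  have "AE \<omega> in M. r i \<omega> - r i (resample \<omega>) = ?U \<omega> * innov i \<omega>"
  proof -
    have "AE \<omega> in M. r i (resample \<omega>) = \<omega> (Some i) * Q (a + r_input i (resample \<omega>))"
      using AE_resample[OF r_eq_input[of i]] assms by simp
    then show ?thesis using r_eq_input[of i] Z(2) Z'(2)
      by eventually_elim (use assms in \<open>simp add: innov_def algebra_simps\<close>)
  qed
  moreover have "?U \<in> borel_measurable (coord_algebra (past_coords i))" using Z(1) Z'(1) by measurable
  moreover have "(\<integral>\<omega>. \<bar>?U \<omega>\<bar> powr p \<partial>M) \<le> L powr p * r_input_moment i"
    using integral_powr_Q_diff_le[OF ZM ZZ(1)] ZZ(2) by (simp add: r_input_moment_def)
  ultimately show ?thesis using integrable_powr_Q_diff[OF ZM ZZ(1)] by (intro bexI[of _ ?U]) auto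
qed

lemma r_resample_diff_factor:
  "\<exists>U :: nat \<Rightarrow> omega \<Rightarrow> real. (\<forall>i. U i \<in> borel_measurable (coord_algebra (past_coords i)))
    \<and> (\<forall>i. integrable M (\<lambda>\<omega>. \<bar>U i \<omega>\<bar> powr p))
    \<and> (\<forall>i. AE \<omega> in M. r i \<omega> - r i (resample \<omega>) = U i \<omega> * innov i \<omega>)
    \<and> (\<forall>i\<ge>1. (\<integral>\<omega>. \<bar>U i \<omega>\<bar> powr p \<partial>M)
       \<le> L powr p * r_input_moment i)"
proof -
  define P where "P i U \<longleftrightarrow> U \<in> borel_measurable (coord_algebra (past_coords i))
     \<and> integrable M (\<lambda>\<omega>. \<bar>U \<omega>\<bar> powr p) \<and> (AE \<omega> in M. r i \<omega> - r i (resample \<omega>) = U \<omega> * innov i \<omega>)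
     \<and> (i \<ge> 1 \<longrightarrow> (\<integral>\<omega>. \<bar>U \<omega>\<bar> powr p \<partial>M) \<le> L powr p * r_input_moment i)"
    for i U
  have "\<exists>U. P i U" for i
  proof (cases "i = 0")
    case True
    from r_resample_diff_factor_0 obtain U where "U \<in> borel_measurable (coord_algebra (past_coords 0))"
      "integrable M (\<lambda>\<omega>. \<bar>U \<omega>\<bar> powr p)" "AE \<omega> in M. r 0 \<omega> - r 0 (resample \<omega>) = U \<omega> * innov 0 \<omega>"
      by blast
    then have "P 0 U" unfolding P_def by simp
    then show ?thesis unfolding True by blast
  next
    case False
    then have "i \<ge> 1" by simp
    from r_resample_diff_factor_pos[OF this] obtain U where "U \<in> borel_measurable (coord_algebra (past_coords i))"
      "integrable M (\<lambda>\<omega>. \<bar>U \<omega>\<bar> powr p)" "AE \<omega> in M. r i \<omega> - r i (resample \<omega>) = U \<omega> * innov i \<omega>"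
      "(\<integral>\<omega>. \<bar>U \<omega>\<bar> powr p \<partial>M) \<le> L powr p * r_input_moment i"
      by blast
    then have "P i U" unfolding P_def by simp
    then show ?thesis by blast
  qed
  then have "\<forall>i. \<exists>U. P i U" by blast
  from choice[OF this] obtain U where "\<forall>i. P i (U i)" by blast
  then show ?thesis unfolding P_def by blast
qed

definition r_moment :: "nat \<Rightarrow> real" where
  "r_moment k = (\<integral>\<omega>. \<bar>r (int k) \<omega> - r (int k) (resample \<omega>)\<bar> powr p \<partial>M)"

lemma r_moment_nonneg: "r_moment k \<ge> 0"
  by (simp add: r_moment_def)

lemma r_moment_le_r_input_moment:
  assumes "k \<ge> 1"
  shows "r_moment k \<le> moment_p * L powr p * r_input_moment k"
proof -
  obtain V :: "nat \<Rightarrow> omega \<Rightarrow> real" where V: "\<And>i. V i \<in> borel_measurable (coord_algebra (past_coords i))"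
    "\<And>i. integrable M (\<lambda>\<omega>. \<bar>V i \<omega>\<bar> powr p)"
    "\<And>i. AE \<omega> in M. r i \<omega> - r i (resample \<omega>) = V i \<omega> * innov i \<omega>"
    "\<And>i. i \<ge> 1 \<Longrightarrow> (\<integral>\<omega>. \<bar>V i \<omega>\<bar> powr p \<partial>M)
       \<le> L powr p * r_input_moment i"
    using r_resample_diff_factor by blast
  define U where "U = V k"
  note U = V(1-3)[of k, folded U_def] V(4)[OF assms, folded U_def]
  have UM: "U \<in> borel_measurable M" using U(1) measurable_coord_algebraD by blast
  have "AE \<omega> in M. \<bar>r k \<omega> - r k (resample \<omega>)\<bar> powr p = \<bar>U \<omega> * innov k \<omega>\<bar> powr p"
    using U(3) by eventually_elim simp
  moreover have "(\<lambda>\<omega>. \<bar>U \<omega> * innov k \<omega>\<bar> powr p) \<in> borel_measurable M" using UM by measurable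
  ultimately have "r_moment k = (\<integral>\<omega>. \<bar>U \<omega> * innov k \<omega>\<bar> powr p \<partial>M)"
    unfolding r_moment_def by (intro integral_cong_AE) simp_all
  also have "\<dots> = (\<integral>\<omega>. \<bar>U \<omega>\<bar> powr p \<partial>M) * moment_p"
    using integral_powr_mult_innov(2)[OF U(1,2)] integral_powr_innov[OF assms] by simp
  also have "\<dots> \<le> L powr p * r_input_moment k * moment_p"
    using U(4) moment_p_nonneg by (rule mult_right_mono)
  finally show ?thesis by (simp add: mult_ac)
qed

lemma r_input_moment_le_rosenthal_bound:
  "r_input_moment k
    \<le> rosenthal_bound p K k (\<lambda>i. \<bar>b (k - i)\<bar> powr p * r_moment i)"
proof -
  obtain U :: "nat \<Rightarrow> omega \<Rightarrow> real" where U: "\<And>i. U i \<in> borel_measurable (coord_algebra (past_coords i))"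
    "\<And>i. integrable M (\<lambda>\<omega>. \<bar>U i \<omega>\<bar> powr p)"
    "\<And>i. AE \<omega> in M. r i \<omega> - r i (resample \<omega>) = U i \<omega> * innov i \<omega>"
    "\<And>i. i \<ge> 1 \<Longrightarrow> (\<integral>\<omega>. \<bar>U i \<omega>\<bar> powr p \<partial>M)
       \<le> L powr p * r_input_moment i"
    using r_resample_diff_factor by blast
  let ?V = "\<lambda>i \<omega>. b (k - i) * U i \<omega>"
  have UM: "U i \<in> borel_measurable M" for i using U(1) measurable_coord_algebraD by blast
  have V: "?V i \<in> borel_measurable (coord_algebra (past_coords i))" for i using U(1) by measurable
  have Vp: "integrable M (\<lambda>\<omega>. \<bar>?V i \<omega>\<bar> powr p)" for i by (rule integrable_powr_cmult[OF U(2)])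
  have AEU: "AE \<omega> in M. \<forall>i. r i \<omega> - r i (resample \<omega>) = U i \<omega> * innov i \<omega>"
    using U(3) by (simp add: AE_all_countable)
  have moment_V: "(\<integral>\<omega>. \<bar>?V i \<omega> * innov i \<omega>\<bar> powr p \<partial>M) = \<bar>b (k - i)\<bar> powr p * r_moment i" for i
  proof -
    have "AE \<omega> in M. \<bar>r i \<omega> - r i (resample \<omega>)\<bar> powr p = \<bar>U i \<omega> * innov i \<omega>\<bar> powr p"
      using U(3)[of i] by eventually_elim simp
    moreover have "(\<lambda>\<omega>. \<bar>U i \<omega> * innov i \<omega>\<bar> powr p) \<in> borel_measurable M" using UM by measurable
    ultimately have "r_moment i = (\<integral>\<omega>. \<bar>U i \<omega> * innov i \<omega>\<bar> powr p \<partial>M)"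
      unfolding r_moment_def by (intro integral_cong_AE) simp_all
    then show ?thesis by (simp add: abs_mult powr_mult mult.assoc)
  qed
  have "AE \<omega> in M. \<bar>r_input k \<omega> - r_input k (resample \<omega>)\<bar> powr p = \<bar>\<Sum>i<k. ?V i \<omega> * innov i \<omega>\<bar> powr p"
    using r_input_resample_diff[of k] AEU by eventually_elim (simp add: mult.assoc)
  moreover have "(\<lambda>\<omega>. \<bar>\<Sum>i<k. ?V i \<omega> * innov i \<omega>\<bar> powr p) \<in> borel_measurable M" using UM by measurable
  ultimately have "r_input_moment k
      = (\<integral>\<omega>. \<bar>\<Sum>i<k. ?V i \<omega> * innov i \<omega>\<bar> powr p \<partial>M)"
    unfolding r_input_moment_def by (intro integral_cong_AE) simp_all
  also have "\<dots> \<le> rosenthal_bound p K k (\<lambda>i. \<integral>\<omega>. \<bar>?V i \<omega> * innov i \<omega>\<bar> powr p \<partial>M)"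
    by (rule moment_sum_mult_innov_le[OF V Vp])
  finally show ?thesis unfolding moment_V .
qed

lemma r_rosenthal_recursion: "\<exists>C0\<ge>0. rosenthal_recursion p K b C0 (moment_p * L powr p) r_moment"
proof -
  define c1 where "c1 = moment_p * L powr p"
  have c1: "c1 \<ge> 0" unfolding c1_def using moment_p_nonneg by simp
  have "rosenthal_recursion p K b (c1 * r_moment 0) c1 r_moment"
    unfolding rosenthal_recursion_def
  proof (intro allI impI)
    fix k :: nat assume "k \<ge> 1"
    have "r_moment k \<le> c1 * rosenthal_bound p K k (\<lambda>i. \<bar>b (k - i)\<bar> powr p * r_moment i)"
      using r_moment_le_r_input_moment[OF \<open>k \<ge> 1\<close>] r_input_moment_le_rosenthal_bound[of k] c1
      unfolding c1_def by (meson order.trans mult_left_mono)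
    also have "\<dots> = rosenthal_bound p K k (\<lambda>i. c1 * (\<bar>b (k - i)\<bar> powr p * r_moment i))"
      using c1 r_moment_nonneg p_pos by (intro rosenthal_bound_cmult) auto
    also have "(\<lambda>i. c1 * (\<bar>b (k - i)\<bar> powr p * r_moment i))
        = (\<lambda>i. \<bar>b (k - i)\<bar> powr p * (if i = 0 then c1 * r_moment 0 else c1 * r_moment i))"
      by (auto simp: fun_eq_iff)
    finally show "r_moment k \<le> rosenthal_bound p K k
        (\<lambda>i. \<bar>b (k - i)\<bar> powr p * (if i = 0 then c1 * r_moment 0 else c1 * r_moment i))" .
  qed
  then show ?thesis using c1 r_moment_nonneg[of 0] by (intro exI[of _ "c1 * r_moment 0"]) (simp add: c1_def)
qed

lemma deltap_r: "deltap M p h (int k) = r_moment k powr (1 / p)"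
  by (simp add: deltap_def r_moment_def r_def past'_eq_past_resample)

end

theorem proposition5:
  fixes p a c \<gamma> L K :: real and \<mu> :: "real measure" and Q :: "real \<Rightarrow> real"
    and b :: "nat \<Rightarrow> real" and g h :: "(nat \<Rightarrow> real) \<Rightarrow> real"
  assumes "p \<ge> 1"
    and "prob_space \<mu>" and "sets \<mu> = sets borel"
    and "integrable \<mu> (\<lambda>x. \<bar>x\<bar> powr p)"
    and "p > 1 \<longrightarrow> (\<integral>x. x \<partial>\<mu>) = 0"
    and "L \<ge> 0" and "\<forall>x y. \<bar>Q x - Q y\<bar> \<le> L * \<bar>x - y\<bar>"
    and "c > 0" and "\<gamma> > max (1/2) (1/p)"
    and "\<forall>j\<ge>1. \<bar>b j\<bar> < c * real j powr (-\<gamma>)"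
    and "rosenthal_const TYPE(omega) p K"
    and "K * (\<integral>x. \<bar>x\<bar> powr p \<partial>\<mu>) * L powr p * Bp p b < 1"
    and "g \<in> borel_measurable (PiM UNIV (\<lambda>_::nat. borel))"
    and "h \<in> borel_measurable (PiM UNIV (\<lambda>_::nat. borel))"
    and "Xsol (iid_space \<mu>) p a b Q (\<lambda>t \<omega>. g (past \<omega> (t - 1)))"
    and "rsol (iid_space \<mu>) p a b Q (\<lambda>t \<omega>. h (past \<omega> t))"
  shows "(\<lambda>k::nat. deltap (iid_space \<mu>) p g (int k - 1)) \<in> O(\<lambda>k. real k powr (-\<gamma>))
       \<and> (\<lambda>k::nat. deltap (iid_space \<mu>) p h (int k)) \<in> O(\<lambda>k. real k powr (-\<gamma>))"
proof -
  define K' where "K' = max K 0"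
  have K': "K' \<ge> 0" "rosenthal_const TYPE(omega) p K'"
    using rosenthal_const_mono[OF assms(11)] by (simp_all add: K'_def)
  note model = model.intro[OF iid.intro[OF assms(2,3)] model_axioms.intro[OF assms(1,4-7) K'(2,1)]]
  interpret X: X_solution \<mu> p a L K' Q b g
    by (rule X_solution.intro[OF model X_solution_axioms.intro[OF assms(13,15)]])
  interpret r: r_solution \<mu> p a L K' Q b h
    by (rule r_solution.intro[OF model r_solution_axioms.intro[OF assms(14,16)]])
  have c1: "X.moment_p * L powr p \<ge> 0" using X.moment_p_nonneg by simp
  have contr: "K' * (X.moment_p * L powr p) * Bp p b < 1"
    using assms(12) by (cases "K \<le> 0") (simp_all add: K'_def X.moment_p_def mult.assoc)
  note decay = rosenthal_recursion_power_decay[OF assms(1) K'(1) c1 _ _ assms(8-10) contr]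
  obtain C0 where "C0 \<ge> 0" "rosenthal_recursion p K' b C0 (X.moment_p * L powr p) X.X_moment"
    using X.X_rosenthal_recursion by blast
  from decay[OF this(1) X.X_moment_nonneg this(2)]
  have "(\<lambda>k. X.X_moment k powr (1 / p)) \<in> O(\<lambda>k. real k powr (-\<gamma>))" .
  moreover obtain C1 where "C1 \<ge> 0" "rosenthal_recursion p K' b C1 (X.moment_p * L powr p) r.r_moment"
    using r.r_rosenthal_recursion by blast
  from decay[OF this(1) r.r_moment_nonneg this(2)]
  have "(\<lambda>k. r.r_moment k powr (1 / p)) \<in> O(\<lambda>k. real k powr (-\<gamma>))" .
  ultimately show ?thesis unfolding X.deltap_X r.deltap_r ..
qed

end
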